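(* Let $X\sim p$ be a norm-subgaussian random vector in $\mathbb{R}^d$, let $s_\theta\colon[0,T_1]\times\mathbb{R}^d\to\mathbb{R}^d$ be Lipschitz continuous, and for each $t$ let $L_s(t)\in\mathbb{R}$ satisfy $(s_\theta(t,x)-s_\theta(t,y))\cdot(x-y)\le L_s(t)\|x-y\|^2$ for all $x,y$. Let $(p_t)_{t\ge0}$ be the laws of the Ornstein--Uhlenbeck process $dX_t=-X_t\,dt+\sqrt2\,dB_t$ with $X_0=X$. Pick $0<\delta<1$ and $T_1\ge\log\big(\frac{16}{\delta}d(\|X\|_{\psi_2}+1)\big)$. Define $\tilde s_\theta\colon\mathbb{R}^d\to\mathbb{R}^d$ componentwise by, with $\ell=\ell(x)=\frac{\delta}{2d}(1+\|x\|)$, $$[\tilde s_\theta(x)]_i=\begin{cases}[s_\theta(T_1,x)]_i,&\text{if }|-x_i-[s_\theta(T_1,x)]_i|\le\ell,\\ -x_i-\ell,&\text{if }[s_\theta(T_1,x)]_i<-x_i-\ell,\\ -x_i+\ell,&\text{if }[s_\theta(T_1,x)]_i>-x_i+\ell.\end{cases}$$ Fix $0<\epsilon<1$ and let $b(T_1)=\mathbb{E}_{p_{T_1}}[\|\nabla\log p_{T_1}-s_\theta(T_1,\cdot)\|^2]$. Then for all $0<\beta\le\frac{1}{36\delta^2}$, $$\log\mathbb{E}_{p_{T_1}}\Big[\exp\big(\beta\|\nabla\log p_{T_1}-\tilde s_\theta\|^2\big)\Big]\le\epsilon,$$ provided that $b(T_1)\le\frac{1}{550\beta}\epsilon^{2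+36\beta\delta^2}$.
   Context: An $\mathbb{R}^d$-valued random variable $X$ is norm-subgaussian if $\|X\|_{\psi_2}:=\inf\{t>0:\mathbb{E}[e^{\|X\|^2/t^2}]\le2\}<\infty$, where $\|\cdot\|$ is the Euclidean norm. Laws are identified with their Lebesgue densities. *)

theory Defs
  imports "HOL-Analysis.Analysis"
begin

definition psi2_norm :: "('a::euclidean_space \<Rightarrow> real) \<Rightarrow> real" where
  "psi2_norm p = Inf {t. t > 0 \<and>
     (\<integral>\<^sup>+ x. ennreal (p x * exp ((norm x)^2 / t^2)) \<partial>lborel) \<le> 2}"

definition norm_subgaussian :: "('a::euclidean_space \<Rightarrow> real) \<Rightarrow> bool" where
  "norm_subgaussian p \<longleftrightarrow> (\<exists>t>0.
     (\<integral>\<^sup>+ x. ennreal (p x * exp ((norm x)^2 / t^2)) \<partial>lborel) \<le> 2)"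

text \<open>Density of the Ornstein--Uhlenbeck marginal p_t (t > 0) of
  dX_t = -X_t dt + sqrt 2 dB_t with X_0 having density p:
  X_t = e^{-t} X_0 + sqrt(1 - e^{-2t}) Z, Z standard Gaussian.\<close>
definition ou_density :: "('a::euclidean_space \<Rightarrow> real) \<Rightarrow> real \<Rightarrow> 'a \<Rightarrow> real" where
  "ou_density p t y = (let var = 1 - exp (-2*t) in
     LINT x|lborel. p x * ((2*pi * var) powr (-(real DIM('a))/2) *
        exp (- ((norm (y - exp (-t) *\<^sub>R x))^2) / (2 * var))))"

definition grad :: "(real^'n \<Rightarrow> real) \<Rightarrow> real^'n \<Rightarrow> real^'n" where
  "grad f x = (\<chi> i. frechet_derivative f (at x) (axis i 1))"

definition clip_score :: "real \<Rightarrow> (real^'n \<Rightarrow> real^'n) \<Rightarrow> real^'n \<Rightarrow> real^'n" where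
  "clip_score \<delta> s x = (let l = \<delta> / (2 * real CARD('n)) * (1 + norm x) in
     (\<chi> i. if \<bar>- (x$i) - (s x)$i\<bar> \<le> l then (s x)$i
           else if (s x)$i < - (x$i) - l then - (x$i) - l
           else - (x$i) + l))"

end

theory Submission
  imports Defs "HOL-Probability.Distributions"
begin

text \<open>
  The Ornstein-Uhlenbeck marginal at time T is the Gaussian convolution
  q(y) = integral of p(x) N(y; a x, V) dx, with a = exp(-T) and V = 1 - a^2.
  Differentiating under the integral gives grad log q(y) + y = (a/V) (E[X | y] - a y), and a
  localization argument based on the subgaussian tail of p bounds |E[X | y]| by
  R = 7 P (1 + |y|), where P = psi2_norm p + 1.  Once a <= delta / (16 d P), every coordinate
  of grad log q(y) therefore lies within l(y) of -y, i.e. inside the clipping box.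
  Clipping into a box that contains the target can only decrease each coordinate error and
  bounds it by 2 l(y); hence the clipped error m satisfies m <= |grad log q - s|^2 and
  m <= delta^2 (1 + |y|)^2 / d.  Splitting on whether exp (beta m) <= L = 6 / eps gives
  exp (beta m) <= 1 + L beta |grad log q - s|^2 + exp (2 beta m) / L.  The middle term
  integrates to at most L beta b(T), the last one to a Gaussian moment of q, which Fubini
  reduces to the subgaussian moment of p.
\<close>

section \<open>Gaussian integrals\<close>

lemma nn_integral_normal_density_exp_square:
  fixes V c m :: real
  assumes V: "V > 0" and c: "2 * c * V < 1"
  shows "(\<integral>\<^sup>+ s. ennreal ((2 * pi * V) powr (-1/2) * exp (- (s - m)\<^sup>2 / (2 * V)) * exp (c * s\<^sup>2)) \<partial>lborel)
       = ennreal ((1 - 2 * c * V) powr (-1/2) * exp (c * m\<^sup>2 / (1 - 2 * c * V)))"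
proof -
  define r where "r = 1 - 2 * c * V"
  have r: "r > 0" using c r_def by simp
  define \<sigma> where "\<sigma> = sqrt (V / r)"
  define \<mu> where "\<mu> = m / r"
  have \<sigma>: "\<sigma> > 0" "\<sigma>\<^sup>2 = V / r" using V r by (simp_all add: \<sigma>_def)
  have completed_square: "(2 * pi * V) powr (-1/2) * exp (- (s - m)\<^sup>2 / (2 * V)) * exp (c * s\<^sup>2)
      = (r powr (-1/2) * exp (c * m\<^sup>2 / r)) * normal_density \<mu> \<sigma> s" for s
  proof -
    have c_eq: "c = (1 - r) / (2 * V)" using V unfolding r_def by (simp add: field_simps)
    have e: "- (s - m)\<^sup>2 / (2 * V) + c * s\<^sup>2 = c * m\<^sup>2 / r + (- (s - \<mu>)\<^sup>2 / (2 * \<sigma>\<^sup>2))"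
      unfolding \<sigma>(2) \<mu>_def c_eq using V r by (simp add: field_simps power2_eq_square)
    have n: "1 / sqrt (2 * pi * \<sigma>\<^sup>2) = (2 * pi * V) powr (-1/2) * sqrt r"
      unfolding \<sigma>(2) using V r
      by (simp add: powr_minus_divide powr_half_sqrt real_sqrt_divide real_sqrt_mult field_simps)
    have rr: "r powr (-1/2) * sqrt r = 1" using r by (simp add: powr_minus_divide powr_half_sqrt)
    have "(2 * pi * V) powr (-1/2) * exp (- (s - m)\<^sup>2 / (2 * V)) * exp (c * s\<^sup>2)
        = (r powr (-1/2) * sqrt r) * (2 * pi * V) powr (-1/2) * exp (c * m\<^sup>2 / r) * exp (- (s - \<mu>)\<^sup>2 / (2 * \<sigma>\<^sup>2))"
      unfolding rr by (simp only: mult_1 mult.assoc exp_add[symmetric] e)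
    also have "\<dots> = (r powr (-1/2) * exp (c * m\<^sup>2 / r)) * normal_density \<mu> \<sigma> s"
      unfolding normal_density_def n by (simp add: algebra_simps)
    finally show ?thesis .
  qed
  have "(\<integral>\<^sup>+ s. ennreal ((2 * pi * V) powr (-1/2) * exp (- (s - m)\<^sup>2 / (2 * V)) * exp (c * s\<^sup>2)) \<partial>lborel)
      = ennreal (r powr (-1/2) * exp (c * m\<^sup>2 / r)) * (\<integral>\<^sup>+ s. ennreal (normal_density \<mu> \<sigma> s) \<partial>lborel)"
    unfolding completed_square by (simp add: ennreal_mult' nn_integral_cmult)
  also have "(\<integral>\<^sup>+ s. ennreal (normal_density \<mu> \<sigma> s) \<partial>lborel) = 1"
    using nn_integral_eq_integral[of lborel "normal_density \<mu> \<sigma>"] \<sigma>(1) by simp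
  finally show ?thesis by (simp add: r_def)
qed

lemma powr_minus_half_DIM:
  assumes "K > 0"
  shows "K powr (- real DIM('a::euclidean_space) / 2) = (K powr (-1/2)) ^ DIM('a)"
proof -
  have "(K powr (-1/2)) ^ DIM('a) = (K powr (-1/2)) powr (real DIM('a))"
    using assms by (simp add: powr_realpow)
  then show ?thesis by (simp add: powr_powr)
qed

lemma nn_integral_gaussian_exp_norm_square:
  fixes m :: "'a::euclidean_space" and V c :: real
  assumes V: "V > 0" and c: "2 * c * V < 1"
  shows "(\<integral>\<^sup>+ y. ennreal ((2 * pi * V) powr (- real DIM('a) / 2) * exp (- (norm (y - m))\<^sup>2 / (2 * V))
                  * exp (c * (norm y)\<^sup>2)) \<partial>lborel)
       = ennreal ((1 - 2 * c * V) powr (- real DIM('a) / 2) * exp (c * (norm m)\<^sup>2 / (1 - 2 * c * V)))"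
proof -
  define f where "f b t = ennreal ((2 * pi * V) powr (-1/2) * exp (- (t - m \<bullet> b)\<^sup>2 / (2 * V)) * exp (c * t\<^sup>2))"
    for b :: 'a and t :: real
  have norm_sq: "(norm x)\<^sup>2 = (\<Sum>b\<in>(Basis::'a set). (x \<bullet> b)\<^sup>2)" for x :: 'a
    unfolding power2_norm_eq_inner by (subst euclidean_inner) (simp add: power2_eq_square)
  have r: "1 - 2 * c * V > 0" using c by simp
  have pV: "2 * pi * V > 0" using V by simp
  have product: "ennreal ((2 * pi * V) powr (- real DIM('a) / 2) * exp (- (norm (y - m))\<^sup>2 / (2 * V))
                   * exp (c * (norm y)\<^sup>2)) = (\<Prod>b\<in>Basis. f b (y \<bullet> b))" for y
  proof -
    have "(2 * pi * V) powr (- real DIM('a) / 2) * exp (- (norm (y - m))\<^sup>2 / (2 * V)) * exp (c * (norm y)\<^sup>2)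
       = (\<Prod>b\<in>(Basis::'a set). (2 * pi * V) powr (-1/2) * exp (- (y \<bullet> b - m \<bullet> b)\<^sup>2 / (2 * V))
            * exp (c * (y \<bullet> b)\<^sup>2))"
      using V unfolding powr_minus_half_DIM[OF pV] by (simp add: norm_sq[of "y - m"] norm_sq[of y] inner_diff_left
          exp_sum[symmetric] sum_divide_distrib[symmetric] sum_distrib_left sum_negf prod.distrib)
    then show ?thesis unfolding f_def by (simp add: prod_ennreal)
  qed
  have "(\<integral>\<^sup>+ y. ennreal ((2 * pi * V) powr (- real DIM('a) / 2) * exp (- (norm (y - m))\<^sup>2 / (2 * V))
                  * exp (c * (norm y)\<^sup>2)) \<partial>lborel) = (\<Prod>b\<in>Basis. \<integral>\<^sup>+ t. f b t \<partial>lborel)"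
    unfolding product by (rule nn_integral_lborel_prod) (auto simp: f_def)
  also have "\<dots> = (\<Prod>b\<in>Basis. ennreal ((1 - 2 * c * V) powr (-1/2) * exp (c * (m \<bullet> b)\<^sup>2 / (1 - 2 * c * V))))"
    unfolding f_def using nn_integral_normal_density_exp_square[OF V c] by simp
  also have "\<dots> = ennreal ((1 - 2 * c * V) powr (- real DIM('a) / 2) * exp (c * (norm m)\<^sup>2 / (1 - 2 * c * V)))"
    using r unfolding powr_minus_half_DIM[OF r] by (simp add: prod_ennreal prod.distrib norm_sq[of m] exp_sum
        sum_divide_distrib sum_distrib_left)
  finally show ?thesis .
qed

section \<open>Differentiating a Gaussian\<close>

lemma le_one_plus_square: "t \<le> 1 + t\<^sup>2" for t :: real
proof -
  have "2 * t \<le> 1 + t\<^sup>2" using zero_le_power2[of "t - 1"] by (simp add: power2_diff)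
  then show ?thesis using zero_le_power2[of t] by linarith
qed

lemma exp_neg_div_mult_le:
  fixes V r :: real
  assumes "V > 0" "r \<ge> 0"
  shows "exp (- r / (2 * V)) * r \<le> 2 * V"
proof -
  have "r \<le> 2 * V * exp (r / (2 * V))"
    using exp_ge_add_one_self[of "r / (2 * V)"] assms by (simp add: field_simps)
  then have "exp (- r / (2 * V)) * r \<le> exp (- r / (2 * V)) * (2 * V * exp (r / (2 * V)))"
    by (intro mult_left_mono) auto
  also have "\<dots> = 2 * V" by (simp add: exp_minus field_simps)
  finally show ?thesis .
qed

lemma gaussian_second_derivative_bound:
  fixes V r b C :: real
  assumes V: "V > 0" and r: "r \<ge> 0" and C: "C \<ge> 0" and b: "b\<^sup>2 \<le> r * C"
  shows "\<bar>exp (- r / (2 * V)) * (b\<^sup>2 / V\<^sup>2 - C / V)\<bar> \<le> 2 * C / V"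
proof -
  have "exp (- r / (2 * V)) * (b\<^sup>2 / V\<^sup>2) \<le> (exp (- r / (2 * V)) * r) * C / V\<^sup>2"
    using b V by (simp add: divide_right_mono)
  also have "\<dots> \<le> (2 * V) * C / V\<^sup>2"
    using exp_neg_div_mult_le[OF V r] C by (intro divide_right_mono mult_right_mono) auto
  also have "\<dots> = 2 * C / V" using V by (simp add: power2_eq_square)
  finally have "exp (- r / (2 * V)) * (b\<^sup>2 / V\<^sup>2) \<le> 2 * C / V" .
  moreover have "exp (- r / (2 * V)) * (C / V) \<le> C / V"
    using r V C by (intro mult_left_le_one_le) (auto simp: divide_nonpos_pos)
  moreover have "0 \<le> exp (- r / (2 * V)) * (b\<^sup>2 / V\<^sup>2)" "0 \<le> exp (- r / (2 * V)) * (C / V)"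
    using C V by simp_all
  moreover have "C / V \<ge> 0" "2 * C / V = 2 * (C / V)" using C V by simp_all
  ultimately show ?thesis unfolding right_diff_distrib abs_le_iff by linarith
qed

lemma gaussian_taylor_remainder:
  fixes u h :: "'a::real_inner"
  assumes V: "V > 0"
  shows "\<bar>exp (- (norm (u + h))\<^sup>2 / (2 * V)) - exp (- (norm u)\<^sup>2 / (2 * V))
            + exp (- (norm u)\<^sup>2 / (2 * V)) * (u \<bullet> h) / V\<bar> \<le> (norm h)\<^sup>2 / V"
proof -
  define A where "A = (norm u)\<^sup>2"
  define B where "B = u \<bullet> h"
  define C where "C = (norm h)\<^sup>2"
  define r where "r t = A + 2 * t * B + t\<^sup>2 * C" for t :: real
  have r_eq: "r t = (norm (u + t *\<^sub>R h))\<^sup>2" for t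
    unfolding r_def A_def B_def C_def power2_norm_eq_inner
    by (simp add: inner_add_left inner_add_right inner_commute power2_eq_square algebra_simps)
  define f0 where "f0 t = exp (- r t / (2 * V))" for t
  define f1 where "f1 t = - f0 t * (B + t * C) / V" for t
  define f2 where "f2 t = f0 t * ((B + t * C)\<^sup>2 / V\<^sup>2 - C / V)" for t
  have d0: "DERIV f0 t :> f1 t" for t
    unfolding f0_def f1_def r_def using V
    by (auto intro!: derivative_eq_intros simp: field_simps)
  have d1: "DERIV f1 t :> f2 t" for t
    unfolding f1_def f2_def using V
    by (auto intro!: derivative_eq_intros d0[unfolded f1_def] simp: field_simps power2_eq_square)
  have "\<exists>t. 0 < t \<and> t < 1 \<and>
      f0 1 = (\<Sum>m<2. ([f0, f1, f2] ! m) 0 / fact m * 1 ^ m) + ([f0, f1, f2] ! 2) t / fact 2 * 1 ^ 2"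
    by (rule Maclaurin) (auto simp: d0 d1 less_2_cases_iff)
  then obtain t where "f0 1 = (\<Sum>m<2. ([f0, f1, f2] ! m) 0 / fact m) + f2 t / 2"
    by auto
  then have taylor: "f0 1 - f0 0 - f1 0 = f2 t / 2" by (simp add: eval_nat_numeral)
  have "(B + t * C)\<^sup>2 \<le> r t * C"
  proof -
    have "\<bar>B + t * C\<bar> \<le> norm (u + t *\<^sub>R h) * norm h"
      using Cauchy_Schwarz_ineq2[of "u + t *\<^sub>R h" h]
      by (simp add: B_def C_def power2_norm_eq_inner inner_add_left)
    then show ?thesis
      unfolding r_eq C_def by (metis abs_ge_zero power2_abs power_mono power_mult_distrib)
  qed
  then have "\<bar>f2 t\<bar> \<le> 2 * C / V"
    unfolding f2_def f0_def using gaussian_second_derivative_bound[OF V] r_eq by (simp add: C_def)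
  then have "\<bar>f0 1 - f0 0 - f1 0\<bar> \<le> C / V" unfolding taylor by (simp add: mult.commute)
  moreover have "f0 1 = exp (- (norm (u + h))\<^sup>2 / (2 * V))" "f0 0 = exp (- (norm u)\<^sup>2 / (2 * V))"
    "f1 0 = - exp (- (norm u)\<^sup>2 / (2 * V)) * (u \<bullet> h) / V"
    using r_eq[of 1] by (simp_all add: f0_def f1_def r_def A_def B_def)
  ultimately show ?thesis by (simp add: C_def)
qed

lemma has_derivative_at_quadratic_remainder:
  fixes f :: "'a::real_normed_vector \<Rightarrow> 'b::real_normed_vector"
  assumes "bounded_linear D" and remainder: "\<And>h. norm (f (x + h) - f x - D h) \<le> K * (norm h)\<^sup>2"
  shows "(f has_derivative D) (at x)"
  unfolding has_derivative_at
proof (intro conjI assms(1))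
  have "\<forall>h. norm (norm (f (x + h) - f x - D h) / norm h) \<le> K * norm h"
  proof
    fix h
    have "norm (f (x + h) - f x - D h) / norm h \<le> K * (norm h)\<^sup>2 / norm h"
      by (rule divide_right_mono[OF remainder norm_ge_zero])
    then show "norm (norm (f (x + h) - f x - D h) / norm h) \<le> K * norm h"
      by (cases "h = 0") (simp_all add: power2_eq_square)
  qed
  moreover have "((\<lambda>h. K * norm h) \<longlongrightarrow> 0) (at 0)"
    by (auto intro!: tendsto_eq_intros)
  ultimately show "((\<lambda>h. norm (f (x + h) - f x - D h) / norm h) \<longlongrightarrow> 0) (at 0)"
    by (rule Lim_null_comparison[OF always_eventually])
qed

section \<open>Gaussian convolutions of a probability density\<close>

(* The density at y of the normal law N(a x, V I); for a = exp (-t) and V = 1 - exp (-2 t)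
   it is the transition kernel of the Ornstein-Uhlenbeck process over time t. *)
definition gauss_kernel :: "real \<Rightarrow> real \<Rightarrow> 'a::euclidean_space \<Rightarrow> 'a \<Rightarrow> real" where
  "gauss_kernel V a y x =
     (2 * pi * V) powr (- real DIM('a) / 2) * exp (- (norm (y - a *\<^sub>R x))\<^sup>2 / (2 * V))"

lemma gauss_kernel_nonneg: "gauss_kernel V a y x \<ge> 0"
  by (simp add: gauss_kernel_def)

lemma gauss_kernel_pos: "V > 0 \<Longrightarrow> gauss_kernel V a y x > 0"
  by (simp add: gauss_kernel_def)

lemma gauss_kernel_le:
  "V > 0 \<Longrightarrow> gauss_kernel V a y (x::'a::euclidean_space) \<le> (2 * pi * V) powr (- real DIM('a) / 2)"
  by (simp add: gauss_kernel_def)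

lemma borel_measurable_gauss_kernel[measurable]:
  fixes f g :: "'b \<Rightarrow> 'a::euclidean_space"
  assumes [measurable]: "f \<in> borel_measurable M" "g \<in> borel_measurable M"
  shows "(\<lambda>z. gauss_kernel V a (f z) (g z)) \<in> borel_measurable M"
  unfolding gauss_kernel_def by measurable

lemma gauss_kernel_mult_norm_le:
  fixes y x :: "'a::euclidean_space"
  assumes V: "V > 0"
  shows "gauss_kernel V a y x * norm (y - a *\<^sub>R x) \<le> (2 * pi * V) powr (- real DIM('a) / 2) * (1 + 2 * V)"
proof -
  define E where "E = exp (- (norm (y - a *\<^sub>R x))\<^sup>2 / (2 * V))"
  have E: "0 \<le> E" "E \<le> 1" "E * (norm (y - a *\<^sub>R x))\<^sup>2 \<le> 2 * V"
    unfolding E_def using V exp_neg_div_mult_le[OF V, of "(norm (y - a *\<^sub>R x))\<^sup>2"]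
    by (auto simp: divide_nonpos_pos)
  have "norm (y - a *\<^sub>R x) \<le> 1 + (norm (y - a *\<^sub>R x))\<^sup>2"
    by (rule le_one_plus_square)
  then have "E * norm (y - a *\<^sub>R x) \<le> E * (1 + (norm (y - a *\<^sub>R x))\<^sup>2)"
    using E by (intro mult_left_mono) auto
  also have "\<dots> \<le> 1 + 2 * V" using E by (simp add: algebra_simps)
  finally show ?thesis
    unfolding gauss_kernel_def E_def[symmetric] by (simp add: mult.assoc mult_left_mono)
qed

lemma gauss_kernel_taylor_remainder:
  fixes x y h :: "'a::euclidean_space"
  assumes V: "V > 0"
  shows "\<bar>gauss_kernel V a (y + h) x - gauss_kernel V a y x - gauss_kernel V a y x / V * ((a *\<^sub>R x - y) \<bullet> h)\<bar>
           \<le> (2 * pi * V) powr (- real DIM('a) / 2) / V * (norm h)\<^sup>2"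
proof -
  define c0 where "c0 = (2 * pi * V) powr (- real DIM('a) / 2)"
  define u where "u = y - a *\<^sub>R x"
  have c0: "c0 \<ge> 0" unfolding c0_def by simp
  have "gauss_kernel V a (y + h) x = c0 * exp (- (norm (u + h))\<^sup>2 / (2 * V))"
    unfolding gauss_kernel_def c0_def u_def by (simp add: algebra_simps)
  moreover have "gauss_kernel V a y x = c0 * exp (- (norm u)\<^sup>2 / (2 * V))"
    unfolding gauss_kernel_def c0_def u_def ..
  moreover have "(a *\<^sub>R x - y) \<bullet> h = - (u \<bullet> h)"
    unfolding u_def by (simp add: inner_diff_left)
  ultimately have "gauss_kernel V a (y + h) x - gauss_kernel V a y x - gauss_kernel V a y x / V * ((a *\<^sub>R x - y) \<bullet> h)
      = c0 * (exp (- (norm (u + h))\<^sup>2 / (2 * V)) - exp (- (norm u)\<^sup>2 / (2 * V))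
              + exp (- (norm u)\<^sup>2 / (2 * V)) * (u \<bullet> h) / V)"
    by (simp only:) (simp add: algebra_simps)
  also have "\<bar>\<dots>\<bar> \<le> c0 * ((norm h)\<^sup>2 / V)"
    unfolding abs_mult abs_of_nonneg[OF c0] by (rule mult_left_mono[OF gaussian_taylor_remainder[OF V] c0])
  finally show ?thesis unfolding c0_def by simp
qed

definition gauss_conv :: "('a::euclidean_space \<Rightarrow> real) \<Rightarrow> real \<Rightarrow> real \<Rightarrow> 'a \<Rightarrow> real" where
  "gauss_conv p V a y = (LINT x|lborel. p x * gauss_kernel V a y x)"

definition gauss_conv_grad :: "('a::euclidean_space \<Rightarrow> real) \<Rightarrow> real \<Rightarrow> real \<Rightarrow> 'a \<Rightarrow> 'a" where
  "gauss_conv_grad p V a y = (LINT x|lborel. (p x * gauss_kernel V a y x / V) *\<^sub>R (a *\<^sub>R x - y))"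

locale prob_density =
  fixes p :: "'a::euclidean_space \<Rightarrow> real"
  assumes borel_measurable_p[measurable]: "p \<in> borel_measurable borel"
    and p_nonneg: "\<And>x. p x \<ge> 0"
    and nn_integral_p: "(\<integral>\<^sup>+ x. ennreal (p x) \<partial>lborel) = 1"
begin

lemma integrable_p: "integrable lborel p"
  by (rule integrableI_nn_integral_finite[where x = 1]) (use p_nonneg nn_integral_p in auto)

lemma integral_p: "(LINT x|lborel. p x) = 1"
  using integral_eq_nn_integral[where M = lborel and f = p] p_nonneg nn_integral_p by simp

lemma integrable_p_gauss_kernel:
  assumes V: "V > 0"
  shows "integrable lborel (\<lambda>x. p x * gauss_kernel V a y x)"
proof (rule Bochner_Integration.integrable_bound)
  show "integrable lborel (\<lambda>x. (2 * pi * V) powr (- real DIM('a) / 2) * p x)"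
    using integrable_p by simp
  show "AE x in lborel. norm (p x * gauss_kernel V a y x) \<le> norm ((2 * pi * V) powr (- real DIM('a) / 2) * p x)"
  proof (rule AE_I2)
    fix x
    show "norm (p x * gauss_kernel V a y x) \<le> norm ((2 * pi * V) powr (- real DIM('a) / 2) * p x)"
      using gauss_kernel_le[OF V, of a y x] p_nonneg[of x] gauss_kernel_nonneg[of V a y x]
      by (simp add: mult.commute mult_left_mono)
  qed
qed measurable

lemma integrable_p_gauss_kernel_grad:
  assumes V: "V > 0"
  shows "integrable lborel (\<lambda>x. (p x * gauss_kernel V a y x / V) *\<^sub>R (a *\<^sub>R x - y))"
proof (rule Bochner_Integration.integrable_bound)
  define c where "c = (2 * pi * V) powr (- real DIM('a) / 2) * (1 + 2 * V) / V"
  show "integrable lborel (\<lambda>x. c * p x)" using integrable_p by simp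
  show "AE x in lborel. norm ((p x * gauss_kernel V a y x / V) *\<^sub>R (a *\<^sub>R x - y)) \<le> norm (c * p x)"
  proof (rule AE_I2)
    fix x
    have "p x * (gauss_kernel V a y x * norm (y - a *\<^sub>R x)) / V \<le> p x * ((2 * pi * V) powr (- real DIM('a) / 2) * (1 + 2 * V)) / V"
      using gauss_kernel_mult_norm_le[OF V] p_nonneg V by (intro divide_right_mono mult_left_mono) auto
    then show "norm ((p x * gauss_kernel V a y x / V) *\<^sub>R (a *\<^sub>R x - y)) \<le> norm (c * p x)"
      using V p_nonneg[of x] gauss_kernel_nonneg[of V a y x]
      by (simp add: c_def norm_minus_commute abs_mult mult_ac)
  qed
qed measurable

lemma gauss_conv_pos:
  assumes V: "V > 0"
  shows "gauss_conv p V a y > 0"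
proof -
  have "gauss_conv p V a y \<ge> 0"
    unfolding gauss_conv_def by (auto intro!: integral_nonneg_AE simp: p_nonneg gauss_kernel_nonneg)
  moreover have "gauss_conv p V a y \<noteq> 0"
  proof
    assume "gauss_conv p V a y = 0"
    then have "AE x in lborel. p x * gauss_kernel V a y x = 0"
      unfolding gauss_conv_def
      by (subst (asm) integral_nonneg_eq_0_iff_AE)
         (auto simp: integrable_p_gauss_kernel[OF V] p_nonneg gauss_kernel_nonneg)
    then have "AE x in lborel. p x = 0"
      by eventually_elim (metis gauss_kernel_pos[OF V] mult_eq_0_iff order_less_irrefl)
    then have "(\<integral>\<^sup>+ x. ennreal (p x) \<partial>lborel) = 0"
      by (subst nn_integral_0_iff_AE) (auto elim!: eventually_mono)
    then show False using nn_integral_p by simp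
  qed
  ultimately show ?thesis by simp
qed

lemma borel_measurable_gauss_conv[measurable]: "gauss_conv p V a \<in> borel_measurable lborel"
  unfolding gauss_conv_def[abs_def] by (rule lborel.borel_measurable_lebesgue_integral) measurable

lemma borel_measurable_gauss_conv_grad[measurable]: "gauss_conv_grad p V a \<in> borel_measurable lborel"
  unfolding gauss_conv_grad_def[abs_def] by (rule lborel.borel_measurable_lebesgue_integral) measurable

lemma nn_integral_gauss_conv_exp_norm_square:
  assumes V: "V > 0" and c: "2 * c * V < 1"
  shows "(\<integral>\<^sup>+ y. ennreal (gauss_conv p V a y * exp (c * (norm y)\<^sup>2)) \<partial>lborel)
       = ennreal ((1 - 2 * c * V) powr (- real DIM('a) / 2))
         * (\<integral>\<^sup>+ x. ennreal (p x * exp (c * (norm (a *\<^sub>R x))\<^sup>2 / (1 - 2 * c * V))) \<partial>lborel)"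
proof -
  have "(\<integral>\<^sup>+ y. ennreal (gauss_conv p V a y * exp (c * (norm y)\<^sup>2)) \<partial>lborel)
     = (\<integral>\<^sup>+ y. (\<integral>\<^sup>+ x. ennreal (p x) * ennreal (gauss_kernel V a y x * exp (c * (norm y)\<^sup>2)) \<partial>lborel) \<partial>lborel)"
  proof (intro nn_integral_cong)
    fix y :: 'a
    have "ennreal (gauss_conv p V a y * exp (c * (norm y)\<^sup>2))
        = ennreal (gauss_conv p V a y) * ennreal (exp (c * (norm y)\<^sup>2))"
      by (rule ennreal_mult) (use gauss_conv_pos[OF V, of a y] in auto)
    also have "ennreal (gauss_conv p V a y) = (\<integral>\<^sup>+ x. ennreal (p x * gauss_kernel V a y x) \<partial>lborel)"
      unfolding gauss_conv_def
      by (rule nn_integral_eq_integral[symmetric])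
         (auto simp: integrable_p_gauss_kernel[OF V] p_nonneg gauss_kernel_nonneg)
    also have "(\<integral>\<^sup>+ x. ennreal (p x * gauss_kernel V a y x) \<partial>lborel) * ennreal (exp (c * (norm y)\<^sup>2))
        = (\<integral>\<^sup>+ x. ennreal (p x) * ennreal (gauss_kernel V a y x * exp (c * (norm y)\<^sup>2)) \<partial>lborel)"
      by (subst nn_integral_multc[symmetric])
         (auto intro!: nn_integral_cong simp: ennreal_mult[symmetric] p_nonneg gauss_kernel_nonneg mult.assoc)
    finally show "ennreal (gauss_conv p V a y * exp (c * (norm y)\<^sup>2))
        = (\<integral>\<^sup>+ x. ennreal (p x) * ennreal (gauss_kernel V a y x * exp (c * (norm y)\<^sup>2)) \<partial>lborel)" .
  qed
  also have "\<dots> = (\<integral>\<^sup>+ x. (\<integral>\<^sup>+ y. ennreal (p x) * ennreal (gauss_kernel V a y x * exp (c * (norm y)\<^sup>2)) \<partial>lborel) \<partial>lborel)"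
    by (rule lborel_pair.Fubini') measurable
  also have "\<dots> = (\<integral>\<^sup>+ x. ennreal (p x) * (\<integral>\<^sup>+ y. ennreal (gauss_kernel V a y x * exp (c * (norm y)\<^sup>2)) \<partial>lborel) \<partial>lborel)"
    by (intro nn_integral_cong nn_integral_cmult) measurable
  also have "\<dots> = (\<integral>\<^sup>+ x. ennreal ((1 - 2 * c * V) powr (- real DIM('a) / 2))
                     * ennreal (p x * exp (c * (norm (a *\<^sub>R x))\<^sup>2 / (1 - 2 * c * V))) \<partial>lborel)"
    unfolding gauss_kernel_def nn_integral_gaussian_exp_norm_square[OF V c]
    by (intro nn_integral_cong) (simp add: ennreal_mult'[symmetric] p_nonneg mult_ac)
  also have "\<dots> = ennreal ((1 - 2 * c * V) powr (- real DIM('a) / 2))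
                   * (\<integral>\<^sup>+ x. ennreal (p x * exp (c * (norm (a *\<^sub>R x))\<^sup>2 / (1 - 2 * c * V))) \<partial>lborel)"
    by (rule nn_integral_cmult) measurable
  finally show ?thesis .
qed

lemma nn_integral_gauss_conv: "V > 0 \<Longrightarrow> (\<integral>\<^sup>+ y. ennreal (gauss_conv p V a y) \<partial>lborel) = 1"
  using nn_integral_gauss_conv_exp_norm_square[of V 0 a] nn_integral_p by simp

lemma gauss_conv_taylor_remainder:
  assumes V: "V > 0"
  shows "\<bar>gauss_conv p V a (y + h) - gauss_conv p V a y - gauss_conv_grad p V a y \<bullet> h\<bar>
           \<le> (2 * pi * V) powr (- real DIM('a) / 2) / V * (norm h)\<^sup>2"
proof -
  define c where "c = (2 * pi * V) powr (- real DIM('a) / 2) / V * (norm h)\<^sup>2"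
  define r where "r x = gauss_kernel V a (y + h) x - gauss_kernel V a y x
                        - gauss_kernel V a y x / V * ((a *\<^sub>R x - y) \<bullet> h)" for x
  define g where "g x = p x * (gauss_kernel V a y x / V * ((a *\<^sub>R x - y) \<bullet> h))" for x
  have g_eq: "g = (\<lambda>x. ((p x * gauss_kernel V a y x / V) *\<^sub>R (a *\<^sub>R x - y)) \<bullet> h)"
    by (simp add: g_def fun_eq_iff)
  have int_g: "integrable lborel g"
    unfolding g_eq by (rule integrable_inner_left[OF integrable_p_gauss_kernel_grad[OF V]])
  have grad_eq: "gauss_conv_grad p V a y \<bullet> h = (LINT x|lborel. g x)"
    unfolding gauss_conv_grad_def g_eq
    by (rule integral_inner_left[symmetric, OF integrable_p_gauss_kernel_grad[OF V]])
  have pr_eq: "p x * r x = p x * gauss_kernel V a (y + h) x - p x * gauss_kernel V a y x - g x" for x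
    unfolding r_def g_def by (simp only: right_diff_distrib)
  have int_pr: "integrable lborel (\<lambda>x. p x * r x)"
    unfolding pr_eq using integrable_p_gauss_kernel[OF V] int_g by simp
  have "gauss_conv p V a (y + h) - gauss_conv p V a y - gauss_conv_grad p V a y \<bullet> h = (LINT x|lborel. p x * r x)"
    unfolding gauss_conv_def grad_eq pr_eq using integrable_p_gauss_kernel[OF V] int_g by simp
  also have "\<bar>\<dots>\<bar> \<le> (LINT x|lborel. p x * c)"
  proof (rule integral_abs_bound_integral[OF int_pr])
    show "integrable lborel (\<lambda>x. p x * c)" using integrable_p by simp
    show "\<bar>p x * r x\<bar> \<le> p x * c" for x
      unfolding abs_mult abs_of_nonneg[OF p_nonneg] r_def c_def
      by (rule mult_left_mono[OF gauss_kernel_taylor_remainder[OF V] p_nonneg])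
  qed
  also have "(LINT x|lborel. p x * c) = c" using integral_p by simp
  finally show ?thesis unfolding c_def .
qed

lemma gauss_conv_has_derivative:
  assumes "V > 0"
  shows "(gauss_conv p V a has_derivative (\<lambda>h. gauss_conv_grad p V a y \<bullet> h)) (at y)"
proof (rule has_derivative_at_quadratic_remainder[OF bounded_linear_inner_right])
  show "norm (gauss_conv p V a (y + h) - gauss_conv p V a y - gauss_conv_grad p V a y \<bullet> h)
          \<le> (2 * pi * V) powr (- real DIM('a) / 2) / V * (norm h)\<^sup>2" for h
    unfolding real_norm_def by (rule gauss_conv_taylor_remainder[OF assms])
qed

end

lemma grad_ln_gauss_conv:
  fixes p :: "real^'n \<Rightarrow> real"
  assumes "prob_density p" and V: "V > 0"
  shows "grad (\<lambda>z. ln (gauss_conv p V a z)) y = inverse (gauss_conv p V a y) *\<^sub>R gauss_conv_grad p V a y"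
proof -
  interpret prob_density p by fact
  have deriv: "((\<lambda>z. ln (gauss_conv p V a z)) has_derivative
          (\<lambda>h. (gauss_conv_grad p V a y \<bullet> h) * inverse (gauss_conv p V a y))) (at y)"
    by (rule DERIV_compose_FDERIV[OF DERIV_ln[OF gauss_conv_pos[OF V]] gauss_conv_has_derivative[OF V]])
  show ?thesis
    unfolding grad_def frechet_derivative_at[OF deriv, symmetric] by (simp add: vec_eq_iff inner_axis)
qed

section \<open>Localization of the posterior mean\<close>

lemma le_exp_square: "s \<le> exp (s\<^sup>2)" for s :: real
  using le_one_plus_square[of s] exp_ge_add_one_self[of "s\<^sup>2"] by linarith

lemma localization_pointwise_bound:
  fixes p k r R kmin E :: real
  assumes p: "0 \<le> p" and k: "0 \<le> k" and E: "0 \<le> E" and R: "0 < R" and kmin: "0 < kmin"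
    and center: "r \<le> R / 2 \<Longrightarrow> kmin \<le> k"
    and far: "R / 2 < r \<Longrightarrow> 4 \<le> E"
    and tail: "R < r \<Longrightarrow> k * r \<le> kmin * (R / 8) * E"
  shows "p * k * r - R * (p * k) \<le> kmin * R * (p * E / 4 - p / 2)"
proof (cases "r \<le> R / 2")
  case True
  have "p * k * r - R * (p * k) = (p * k) * (r - R)" by (simp add: algebra_simps)
  also have "\<dots> \<le> (p * k) * (- R / 2)" using True p k by (intro mult_left_mono) auto
  also have "\<dots> \<le> (p * kmin) * (- R / 2)"
    using center[OF True] p R by (intro mult_right_mono_neg mult_left_mono) auto
  also have "\<dots> = - (kmin * R * (p / 2))" by simp
  finally have "p * k * r - R * (p * k) \<le> - (kmin * R * (p / 2))" .
  moreover have "0 \<le> kmin * R * (p * E / 4)" using E p kmin R by simp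
  ultimately show ?thesis unfolding right_diff_distrib by linarith
next
  case False
  then have E4: "4 \<le> E" by (intro far) simp
  have quarter: "p / 8 \<le> p * E / 4 - p / 2" "0 \<le> p * E / 4 - p / 2"
    using mult_left_mono[OF E4 p] p by linarith+
  show ?thesis
  proof (cases "r \<le> R")
    case True
    have "p * k * r - R * (p * k) = (p * k) * (r - R)" by (simp add: algebra_simps)
    also have "\<dots> \<le> 0" using True p k by (intro mult_nonneg_nonpos) auto
    moreover have "0 \<le> kmin * R * (p * E / 4 - p / 2)" using quarter kmin R by simp
    ultimately show ?thesis by linarith
  next
    case False
    have "p * (k * r) \<le> p * (kmin * (R / 8) * E)" using tail False p by (intro mult_left_mono) auto
    also have "\<dots> = kmin * R * (p * E / 8)" by simp
    also have "\<dots> \<le> kmin * R * (p * E / 4 - p / 2)"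
      using mult_left_mono[OF E4 p] kmin R by (intro mult_left_mono) (auto simp: mult.commute)
    finally have "p * k * r \<le> kmin * R * (p * E / 4 - p / 2)" by (simp add: mult.assoc)
    moreover have "0 \<le> R * (p * k)" using p k R by simp
    ultimately show ?thesis by linarith
  qed
qed

locale subgaussian_density = prob_density p for p :: "'a::euclidean_space \<Rightarrow> real" +
  fixes \<tau> :: real
  assumes \<tau>_pos: "\<tau> > 0"
    and nn_integral_exp_square: "(\<integral>\<^sup>+ x. ennreal (p x * exp ((norm x)\<^sup>2 / \<tau>\<^sup>2)) \<partial>lborel) \<le> 2"
begin

lemma integrable_exp_square: "integrable lborel (\<lambda>x. p x * exp ((norm x)\<^sup>2 / \<tau>\<^sup>2))"
proof (rule integrableI_bounded)
  have "(\<integral>\<^sup>+ x. ennreal (norm (p x * exp ((norm x)\<^sup>2 / \<tau>\<^sup>2))) \<partial>lborel)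
      = (\<integral>\<^sup>+ x. ennreal (p x * exp ((norm x)\<^sup>2 / \<tau>\<^sup>2)) \<partial>lborel)"
    using p_nonneg by (intro nn_integral_cong) simp
  then show "(\<integral>\<^sup>+ x. ennreal (norm (p x * exp ((norm x)\<^sup>2 / \<tau>\<^sup>2))) \<partial>lborel) < \<infinity>"
    using nn_integral_exp_square by (simp add: le_less_trans)
qed measurable

lemma integral_exp_square_le: "(LINT x|lborel. p x * exp ((norm x)\<^sup>2 / \<tau>\<^sup>2)) \<le> 2"
proof -
  have "ennreal (LINT x|lborel. p x * exp ((norm x)\<^sup>2 / \<tau>\<^sup>2))
      = (\<integral>\<^sup>+ x. ennreal (p x * exp ((norm x)\<^sup>2 / \<tau>\<^sup>2)) \<partial>lborel)"
    by (rule nn_integral_eq_integral[symmetric]) (use integrable_exp_square p_nonneg in auto)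
  then show ?thesis
    using nn_integral_exp_square by (simp add: ennreal_le_iff[symmetric] del: ennreal_le_iff)
qed

lemma integrable_first_moment:
  fixes k :: "'a \<Rightarrow> real"
  assumes [measurable]: "k \<in> borel_measurable lborel" and k: "\<And>x. 0 \<le> k x" "\<And>x. k x \<le> B"
  shows "integrable lborel (\<lambda>x. (p x * k x) *\<^sub>R x)"
proof (rule Bochner_Integration.integrable_bound)
  show "integrable lborel (\<lambda>x. B * \<tau> * (p x * exp ((norm x)\<^sup>2 / \<tau>\<^sup>2)))"
    using integrable_exp_square by simp
  show "AE x in lborel. norm ((p x * k x) *\<^sub>R x) \<le> norm (B * \<tau> * (p x * exp ((norm x)\<^sup>2 / \<tau>\<^sup>2)))"
  proof (rule AE_I2)
    fix x :: 'a
    have "norm x \<le> \<tau> * exp ((norm x)\<^sup>2 / \<tau>\<^sup>2)"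
      using le_exp_square[of "norm x / \<tau>"] \<tau>_pos by (simp add: power_divide field_simps)
    then have "p x * (k x * norm x) \<le> p x * (B * (\<tau> * exp ((norm x)\<^sup>2 / \<tau>\<^sup>2)))"
      using k[of x] p_nonneg[of x] by (intro mult_left_mono mult_mono) auto
    moreover have "0 \<le> B" using k[of x] by linarith
    ultimately show "norm ((p x * k x) *\<^sub>R x) \<le> norm (B * \<tau> * (p x * exp ((norm x)\<^sup>2 / \<tau>\<^sup>2)))"
      using k[of x] p_nonneg[of x] \<tau>_pos by (simp add: abs_mult mult_ac)
  qed
qed measurable

lemma first_moment_localization:
  assumes R: "R > 0" "4 \<le> exp (R\<^sup>2 / (4 * \<tau>\<^sup>2))"
    and kmin: "kmin > 0" and k_nonneg: "\<And>x. k x \<ge> 0"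
    and k_center: "\<And>x. norm x \<le> R / 2 \<Longrightarrow> k x \<ge> kmin"
    and k_tail: "\<And>x. norm x > R \<Longrightarrow> k x * norm x \<le> kmin * (R / 8) * exp ((norm x)\<^sup>2 / \<tau>\<^sup>2)"
    and int_k: "integrable lborel (\<lambda>x. p x * k x)"
    and int_k_norm: "integrable lborel (\<lambda>x. p x * k x * norm x)"
  shows "(LINT x|lborel. p x * k x * norm x) \<le> R * (LINT x|lborel. p x * k x)"
proof -
  define pe where "pe x = p x * exp ((norm x)\<^sup>2 / \<tau>\<^sup>2)" for x
  have pe_nonneg: "pe x \<ge> 0" for x unfolding pe_def using p_nonneg[of x] by simp
  have far: "4 \<le> exp ((norm x)\<^sup>2 / \<tau>\<^sup>2)" if "norm x > R / 2" for x
  proof -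
    have "(R / 2)\<^sup>2 \<le> (norm x)\<^sup>2" using that R by (intro power_mono) auto
    then have "R\<^sup>2 / 4 / \<tau>\<^sup>2 \<le> (norm x)\<^sup>2 / \<tau>\<^sup>2"
      by (intro divide_right_mono) (simp_all add: power_divide)
    then show ?thesis using R(2) by (simp add: order_trans)
  qed
  have pointwise: "p x * k x * norm x - R * (p x * k x) \<le> kmin * R * (pe x / 4 - p x / 2)" for x
    unfolding pe_def using p_nonneg k_nonneg R(1) kmin k_center k_tail far
    by (intro localization_pointwise_bound) auto
  have int_pe: "integrable lborel pe" unfolding pe_def by (rule integrable_exp_square)
  have "(LINT x|lborel. p x * k x * norm x - R * (p x * k x)) \<le> (LINT x|lborel. kmin * R * (pe x / 4 - p x / 2))"
    by (rule integral_mono) (use pointwise int_k_norm int_k integrable_p int_pe in auto)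
  also have "\<dots> = kmin * R * ((LINT x|lborel. pe x) / 4 - 1 / 2)"
    using int_pe integrable_p integral_p by simp
  also have "\<dots> \<le> 0"
    using integral_exp_square_le kmin R unfolding pe_def by (intro mult_nonneg_nonpos) auto
  finally show ?thesis using int_k_norm int_k by simp
qed

end

lemma gauss_kernel_center_bound:
  fixes x y :: "'a::euclidean_space"
  assumes V: "V > 0" and a: "a \<ge> 0" and x: "norm x \<le> R / 2"
  shows "gauss_kernel V a y x \<ge> (2 * pi * V) powr (- real DIM('a) / 2) * exp (- ((norm y + a * R / 2)\<^sup>2) / (2 * V))"
proof -
  have "norm (y - a *\<^sub>R x) \<le> norm y + norm (a *\<^sub>R x)" by (rule norm_triangle_ineq4)
  also have "norm (a *\<^sub>R x) = a * norm x" using a by simp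
  also have "a * norm x \<le> a * (R / 2)" using a x by (intro mult_left_mono) auto
  finally have "norm (y - a *\<^sub>R x) \<le> norm y + a * R / 2" by simp
  then have "(norm (y - a *\<^sub>R x))\<^sup>2 \<le> (norm y + a * R / 2)\<^sup>2" by (intro power_mono) auto
  then have "- ((norm y + a * R / 2)\<^sup>2) / (2 * V) \<le> - ((norm (y - a *\<^sub>R x))\<^sup>2) / (2 * V)"
    using V by (intro divide_right_mono) auto
  then show ?thesis unfolding gauss_kernel_def by (intro mult_left_mono) auto
qed

lemma mult_le_exp_four_square:
  fixes r R :: real
  assumes "0 < R" "R \<le> r"
  shows "8 * r \<le> R * exp (4 * r\<^sup>2 / R\<^sup>2)"
proof -
  define s where "s = r / R"
  have s: "1 \<le> s" using assms by (simp add: s_def)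
  have s2: "1 \<le> s\<^sup>2" using s by (simp add: one_le_power)
  have "8 * s \<le> 8 * s\<^sup>2" using s by (simp add: power2_eq_square)
  moreover have "4 * s\<^sup>2 * 1 \<le> 4 * s\<^sup>2 * s\<^sup>2" using s2 by (intro mult_left_mono) auto
  ultimately have "8 * s \<le> 4 * s\<^sup>2 * s\<^sup>2 + 4 * s\<^sup>2 + 1" by linarith
  also have "\<dots> = (1 + 2 * s\<^sup>2)\<^sup>2" by (simp add: power2_eq_square algebra_simps)
  also have "\<dots> \<le> (exp (2 * s\<^sup>2))\<^sup>2" by (intro power_mono exp_ge_add_one_self) simp
  also have "\<dots> = exp (4 * s\<^sup>2)" by (simp flip: exp_add add: power2_eq_square)
  finally have "R * (8 * s) \<le> R * exp (4 * s\<^sup>2)" using assms by (intro mult_left_mono) auto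
  then show ?thesis using assms by (simp add: s_def power_divide)
qed

lemma gaussian_tail_exponent_le:
  fixes V a n r R \<tau> :: real
  assumes V: "V > 0" and a: "a \<ge> 0" and n: "n \<ge> 0" and R: "0 < R" "R < r"
    and tail: "4 / R\<^sup>2 + (3 * a * n / R + a\<^sup>2 / 4) / (2 * V) \<le> 1 / \<tau>\<^sup>2"
  shows "exp ((2 * a * n * r - n\<^sup>2) / (2 * V)) * r
           \<le> exp (- (n + a * R / 2)\<^sup>2 / (2 * V)) * (R / 8) * exp (r\<^sup>2 / \<tau>\<^sup>2)"
proof -
  define Z where "Z = (a * n * R + a\<^sup>2 * R\<^sup>2 / 4 + 2 * a * n * r) / (2 * V)"
  have exponent_split: "(2 * a * n * r - n\<^sup>2) / (2 * V) = - (n + a * R / 2)\<^sup>2 / (2 * V) + Z"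
    unfolding Z_def using V by (simp add: field_simps power2_eq_square)
  have r: "r \<le> r\<^sup>2 / R" using R by (simp add: field_simps power2_eq_square)
  have an: "0 \<le> a * n" using a n by simp
  have "a * n * R \<le> a * n * (r\<^sup>2 / R)" using an r R by (intro mult_left_mono) auto
  moreover have "a\<^sup>2 * R\<^sup>2 / 4 \<le> a\<^sup>2 * r\<^sup>2 / 4"
    using R by (intro divide_right_mono mult_left_mono power_mono) auto
  moreover have "2 * a * n * r \<le> 2 * a * n * (r\<^sup>2 / R)"
    using mult_left_mono[OF r, of "2 * (a * n)"] an by (simp add: mult.assoc)
  ultimately have "a * n * R + a\<^sup>2 * R\<^sup>2 / 4 + 2 * a * n * r \<le> a * n * (r\<^sup>2 / R) + a\<^sup>2 * r\<^sup>2 / 4 + 2 * a * n * (r\<^sup>2 / R)"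
    by linarith
  also have "\<dots> = r\<^sup>2 * (3 * a * n / R + a\<^sup>2 / 4)" by (simp add: field_simps)
  finally have "Z \<le> r\<^sup>2 * ((3 * a * n / R + a\<^sup>2 / 4) / (2 * V))"
    unfolding Z_def using V by (simp add: divide_right_mono)
  then have "4 * r\<^sup>2 / R\<^sup>2 + Z \<le> r\<^sup>2 * (4 / R\<^sup>2 + (3 * a * n / R + a\<^sup>2 / 4) / (2 * V))"
    by (simp add: algebra_simps)
  also have "\<dots> \<le> r\<^sup>2 / \<tau>\<^sup>2" using tail mult_left_mono[OF tail, of "r\<^sup>2"] by simp
  finally have exponent: "4 * r\<^sup>2 / R\<^sup>2 + Z \<le> r\<^sup>2 / \<tau>\<^sup>2" .
  have "exp Z * (8 * r) \<le> exp Z * (R * exp (4 * r\<^sup>2 / R\<^sup>2))"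
    using mult_le_exp_four_square[of R r] R by (intro mult_left_mono) auto
  also have "\<dots> = R * exp (4 * r\<^sup>2 / R\<^sup>2 + Z)" by (simp add: exp_add)
  also have "\<dots> \<le> R * exp (r\<^sup>2 / \<tau>\<^sup>2)" using exponent R by (intro mult_left_mono) auto
  finally have "exp Z * r \<le> R / 8 * exp (r\<^sup>2 / \<tau>\<^sup>2)" by simp
  then show ?thesis
    unfolding exponent_split exp_add by (simp add: mult.assoc mult_left_mono)
qed

lemma gauss_kernel_tail_bound:
  fixes x y :: "'a::euclidean_space"
  assumes V: "V > 0" and a: "a \<ge> 0" and R: "0 < R" "R < norm x"
    and tail: "4 / R\<^sup>2 + (3 * a * norm y / R + a\<^sup>2 / 4) / (2 * V) \<le> 1 / \<tau>\<^sup>2"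
  shows "gauss_kernel V a y x * norm x
           \<le> (2 * pi * V) powr (- real DIM('a) / 2) * exp (- (norm y + a * R / 2)\<^sup>2 / (2 * V))
              * (R / 8) * exp ((norm x)\<^sup>2 / \<tau>\<^sup>2)"
proof -
  have "(norm (y - a *\<^sub>R x))\<^sup>2 = (norm y)\<^sup>2 - 2 * a * (y \<bullet> x) + a\<^sup>2 * (norm x)\<^sup>2"
    unfolding power2_norm_eq_inner
    by (simp add: inner_diff_left inner_diff_right inner_commute power2_eq_square algebra_simps)
  moreover have "2 * a * (y \<bullet> x) \<le> 2 * a * norm y * norm x"
    using mult_left_mono[OF norm_cauchy_schwarz[of y x], of "2 * a"] a by (simp add: mult.assoc)
  moreover have "0 \<le> a\<^sup>2 * (norm x)\<^sup>2" by simp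
  ultimately have "(norm y)\<^sup>2 - 2 * a * norm y * norm x \<le> (norm (y - a *\<^sub>R x))\<^sup>2"
    by linarith
  then have "- (norm (y - a *\<^sub>R x))\<^sup>2 / (2 * V) \<le> (2 * a * norm y * norm x - (norm y)\<^sup>2) / (2 * V)"
    using V by (intro divide_right_mono) auto
  then have "gauss_kernel V a y x \<le> (2 * pi * V) powr (- real DIM('a) / 2)
                                     * exp ((2 * a * norm y * norm x - (norm y)\<^sup>2) / (2 * V))"
    unfolding gauss_kernel_def by (intro mult_left_mono) auto
  then have "gauss_kernel V a y x * norm x \<le> (2 * pi * V) powr (- real DIM('a) / 2)
               * (exp ((2 * a * norm y * norm x - (norm y)\<^sup>2) / (2 * V)) * norm x)"
    unfolding mult.assoc[symmetric] by (rule mult_right_mono) simp_all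
  also have "\<dots> \<le> (2 * pi * V) powr (- real DIM('a) / 2)
               * (exp (- (norm y + a * R / 2)\<^sup>2 / (2 * V)) * (R / 8) * exp ((norm x)\<^sup>2 / \<tau>\<^sup>2))"
    by (intro mult_left_mono gaussian_tail_exponent_le[OF V a norm_ge_zero R tail]) simp
  finally show ?thesis by (simp add: mult.assoc)
qed

lemma ou_scale_bounds:
  fixes d P \<delta> a :: real
  assumes d: "d \<ge> 1" and P: "P \<ge> 1" and \<delta>: "\<delta> \<le> 1" and a: "0 \<le> a" "a \<le> \<delta> / (16 * d * P)"
  shows "a * P \<le> \<delta> / (16 * d)" "a \<le> \<delta> / (16 * d)" "\<delta> / (16 * d) \<le> 1 / 16" "255 / 256 \<le> 1 - a\<^sup>2"
proof -
  show aP: "a * P \<le> \<delta> / (16 * d)"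
    using mult_right_mono[OF a(2), of P] P d by (simp add: field_simps)
  have "a * 1 \<le> a * P" using a P by (intro mult_left_mono) auto
  with aP show a_le: "a \<le> \<delta> / (16 * d)" by simp
  show e_le: "\<delta> / (16 * d) \<le> 1 / 16" using d \<delta> by (simp add: field_simps)
  have "a\<^sup>2 \<le> (1 / 16)\<^sup>2" using a a_le e_le by (intro power_mono) auto
  then show "255 / 256 \<le> 1 - a\<^sup>2" by (simp add: power2_eq_square)
qed

(* With n = |y| and the localization radius R = 7 P (1 + n), the left-hand side is the bound
   (a / V) (R + a n) of gauss_conv_score_bound. *)
lemma ou_drift_bound:
  fixes d P \<delta> a n :: real
  assumes d: "d \<ge> 1" and P: "P \<ge> 1" and \<delta>: "\<delta> \<le> 1" and a: "0 \<le> a" "a \<le> \<delta> / (16 * d * P)"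
    and n: "n \<ge> 0"
  shows "a / (1 - a\<^sup>2) * (7 * P * (1 + n) + a * n) \<le> \<delta> / (2 * d) * (1 + n)"
proof -
  note scale = ou_scale_bounds[OF d P \<delta> a]
  define e where "e = \<delta> / (16 * d)"
  have e: "0 \<le> a" "a \<le> e" "a * P \<le> e" "e \<le> 1 / 16" using scale a unfolding e_def by auto
  have "a * (7 * P * (1 + n)) = 7 * (1 + n) * (a * P)" by (simp add: algebra_simps)
  also have "\<dots> \<le> 7 * (1 + n) * e" using e n by (intro mult_left_mono) auto
  finally have main: "a * (7 * P * (1 + n)) \<le> 7 * (e * (1 + n))" by (simp add: mult_ac)
  have "a * (a * n) \<le> e * (e * n)" using e n by (intro mult_mono mult_right_mono) auto
  also have "\<dots> \<le> (1 / 16) * (e * (1 + n))" using e n by (intro mult_mono) auto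
  finally have "a * (7 * P * (1 + n) + a * n) \<le> 113 / 16 * (e * (1 + n))"
    using main unfolding distrib_left by linarith
  moreover note scale(4)
  moreover have "0 \<le> e * (1 + n)" using e n by simp
  ultimately have "a * (7 * P * (1 + n) + a * n) / (1 - a\<^sup>2) \<le> 113 / 16 * (e * (1 + n)) / (255 / 256)"
    by (intro frac_le) auto
  also have "\<dots> \<le> 8 * (e * (1 + n))" using \<open>0 \<le> e * (1 + n)\<close> by simp
  also have "\<dots> = \<delta> / (2 * d) * (1 + n)" unfolding e_def by simp
  finally show ?thesis by simp
qed

lemma ou_localization_conditions:
  fixes P \<tau> a V n R :: real
  assumes P: "1 \<le> P" "0 < \<tau>" "\<tau> \<le> P" and a: "0 \<le> a" "a * P \<le> 1 / 16" and V: "1 / 2 \<le> V"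
    and n: "0 \<le> n" and R: "R = 7 * P * (1 + n)"
  shows "4 \<le> exp (R\<^sup>2 / (4 * \<tau>\<^sup>2))"
    and "4 / R\<^sup>2 + (3 * a * n / R + a\<^sup>2 / 4) / (2 * V) \<le> 1 / \<tau>\<^sup>2"
proof -
  have "7 * P * 1 \<le> R" unfolding R using P n by (intro mult_left_mono) auto
  then have R2: "49 * P\<^sup>2 \<le> R\<^sup>2" using power_mono[of "7 * P" R 2] P by (simp add: power_mult_distrib)
  have P2: "\<tau>\<^sup>2 \<le> P\<^sup>2" using P by (intro power_mono) auto
  have R0: "R > 0" unfolding R using P n by simp
  have "12 * \<tau>\<^sup>2 \<le> R\<^sup>2" using R2 P2 zero_le_power2[of \<tau>] by linarith
  then have "3 \<le> R\<^sup>2 / (4 * \<tau>\<^sup>2)" using P by (simp add: field_simps)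
  then have "1 + 3 \<le> exp (R\<^sup>2 / (4 * \<tau>\<^sup>2))"
    using exp_ge_add_one_self[of "R\<^sup>2 / (4 * \<tau>\<^sup>2)"] by linarith
  then show "4 \<le> exp (R\<^sup>2 / (4 * \<tau>\<^sup>2))" by simp
  have c1: "4 / R\<^sup>2 \<le> 4 / (49 * P\<^sup>2)" using R2 P R0 by (intro divide_left_mono) auto
  have "3 * a * n / R \<le> 3 * a * (1 + n) / R" using a R0 by (intro divide_right_mono) (auto simp: distrib_left)
  also have "\<dots> = 3 * a / (7 * P)" unfolding R
    by (rule nonzero_mult_divide_mult_cancel_right) (use n in simp)
  also have "\<dots> = 3 * (a * P) / (7 * P\<^sup>2)" using P by (simp add: field_simps power2_eq_square)
  also have "\<dots> \<le> 3 * (1 / 16) / (7 * P\<^sup>2)" using a P by (intro divide_right_mono mult_left_mono) auto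
  finally have c2: "3 * a * n / R \<le> 3 / (112 * P\<^sup>2)" by simp
  have "(a * P)\<^sup>2 \<le> (1 / 16)\<^sup>2" using a P by (intro power_mono) auto
  then have c3: "a\<^sup>2 / 4 \<le> 1 / (1024 * P\<^sup>2)" using P by (simp add: field_simps power_mult_distrib)
  have "0 \<le> 3 * a * n / R + a\<^sup>2 / 4" using a n R0 by simp
  then have c4: "(3 * a * n / R + a\<^sup>2 / 4) / (2 * V) \<le> 3 * a * n / R + a\<^sup>2 / 4"
    using V by (simp add: divide_le_eq mult_le_cancel_left1)
  have "4 / R\<^sup>2 + (3 * a * n / R + a\<^sup>2 / 4) / (2 * V) \<le> 4 / (49 * P\<^sup>2) + 3 / (112 * P\<^sup>2) + 1 / (1024 * P\<^sup>2)"
    using c1 c2 c3 c4 by linarith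
  also have "\<dots> \<le> 1 / P\<^sup>2" using P by (simp add: field_simps)
  also have "\<dots> \<le> 1 / \<tau>\<^sup>2" using P2 P by (intro divide_left_mono) auto
  finally show "4 / R\<^sup>2 + (3 * a * n / R + a\<^sup>2 / 4) / (2 * V) \<le> 1 / \<tau>\<^sup>2" .
qed

lemma powr_neg_half_card_le:
  fixes w :: real and n :: nat
  assumes n: "n \<ge> 1" and w: "1 - 2 / (9 * real n) \<le> w" "w \<le> 1"
  shows "w powr (- real n / 2) \<le> 9 / 7"
proof -
  have "7 / 9 \<le> 1 + real n * (- 2 / (9 * real n))" using n by simp
  also have "\<dots> \<le> (1 + (- 2 / (9 * real n))) ^ n"
    by (rule Bernoulli_inequality) (use n in \<open>simp add: field_simps\<close>)
  also have "\<dots> \<le> w ^ n" using w n by (intro power_mono) (auto simp: field_simps)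
  finally have wn: "7 / 9 \<le> w ^ n" .
  have "2 / (9 * real n) \<le> 2 / 9" using n by (simp add: field_simps)
  then have w0: "w > 0" using w by linarith
  have "w powr (- real n / 2) = (w ^ n) powr (-1 / 2)" using w0 by (simp add: powr_realpow[symmetric] powr_powr)
  also have "\<dots> \<le> (7 / 9) powr (-1 / 2)" using wn by (intro powr_mono2') auto
  also have "\<dots> = 1 / sqrt (7 / 9)" by (simp add: powr_minus_divide powr_half_sqrt)
  also have "\<dots> \<le> 9 / 7"
    using real_le_rsqrt[of "7 / 9" "7 / 9"] by (simp add: power2_eq_square field_simps)
  finally show ?thesis .
qed

context subgaussian_density
begin

lemma integrable_gauss_kernel_first_moment:
  "V > 0 \<Longrightarrow> integrable lborel (\<lambda>x. (p x * gauss_kernel V a y x) *\<^sub>R x)"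
  using gauss_kernel_nonneg gauss_kernel_le by (intro integrable_first_moment) auto

lemma gauss_conv_grad_eq:
  assumes V: "V > 0"
  shows "gauss_conv_grad p V a y
           = (a / V) *\<^sub>R (LINT x|lborel. (p x * gauss_kernel V a y x) *\<^sub>R x) - (gauss_conv p V a y / V) *\<^sub>R y"
proof -
  define k where "k x = gauss_kernel V a y x" for x
  have int_M: "integrable lborel (\<lambda>x. (p x * k x) *\<^sub>R x)"
    unfolding k_def by (rule integrable_gauss_kernel_first_moment[OF V])
  have int_k: "integrable lborel (\<lambda>x. p x * k x)"
    unfolding k_def by (rule integrable_p_gauss_kernel[OF V])
  have "gauss_conv_grad p V a y = (LINT x|lborel. (a / V) *\<^sub>R ((p x * k x) *\<^sub>R x) - (p x * k x / V) *\<^sub>R y)"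
    unfolding gauss_conv_grad_def k_def by (intro Bochner_Integration.integral_cong) (simp_all add: algebra_simps)
  also have "\<dots> = (LINT x|lborel. (a / V) *\<^sub>R ((p x * k x) *\<^sub>R x)) - (LINT x|lborel. (p x * k x / V) *\<^sub>R y)"
    by (intro Bochner_Integration.integral_diff integrable_scaleR_right integrable_scaleR_left
        integrable_divide int_M int_k)
  also have "\<dots> = (a / V) *\<^sub>R (LINT x|lborel. (p x * k x) *\<^sub>R x) - (gauss_conv p V a y / V) *\<^sub>R y"
    unfolding gauss_conv_def k_def[symmetric] integral_scaleR_right using int_k by simp
  finally show ?thesis unfolding k_def .
qed

lemma gauss_conv_first_moment_le:
  assumes V: "V > 0" and a: "a \<ge> 0" and R: "R > 0" "4 \<le> exp (R\<^sup>2 / (4 * \<tau>\<^sup>2))"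
    and tail: "4 / R\<^sup>2 + (3 * a * norm y / R + a\<^sup>2 / 4) / (2 * V) \<le> 1 / \<tau>\<^sup>2"
  shows "norm (LINT x|lborel. (p x * gauss_kernel V a y x) *\<^sub>R x) \<le> R * gauss_conv p V a y"
proof -
  define k where "k x = gauss_kernel V a y x" for x
  define kmin where "kmin = (2 * pi * V) powr (- real DIM('a) / 2) * exp (- (norm y + a * R / 2)\<^sup>2 / (2 * V))"
  have int_M: "integrable lborel (\<lambda>x. (p x * k x) *\<^sub>R x)"
    unfolding k_def by (rule integrable_gauss_kernel_first_moment[OF V])
  have int_k_norm: "integrable lborel (\<lambda>x. p x * k x * norm x)"
    using integrable_norm[OF int_M] p_nonneg by (simp add: k_def gauss_kernel_nonneg)
  have "norm (LINT x|lborel. (p x * k x) *\<^sub>R x) \<le> (LINT x|lborel. p x * k x * norm x)"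
    by (rule Bochner_Integration.integral_norm_bound_integral[OF int_M int_k_norm])
       (simp add: k_def p_nonneg gauss_kernel_nonneg)
  also have "\<dots> \<le> R * gauss_conv p V a y"
    unfolding gauss_conv_def k_def[symmetric]
  proof (rule first_moment_localization[OF R, where kmin = kmin])
    show "kmin > 0" unfolding kmin_def using V by simp
    show "k x \<ge> kmin" if "norm x \<le> R / 2" for x
      unfolding k_def kmin_def by (rule gauss_kernel_center_bound[OF V a that])
    show "k x * norm x \<le> kmin * (R / 8) * exp ((norm x)\<^sup>2 / \<tau>\<^sup>2)" if "norm x > R" for x
      unfolding k_def kmin_def by (rule gauss_kernel_tail_bound[OF V a R(1) that tail])
    show "integrable lborel (\<lambda>x. p x * k x)"
      unfolding k_def by (rule integrable_p_gauss_kernel[OF V])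
  qed (use int_k_norm in \<open>auto simp: k_def gauss_kernel_nonneg\<close>)
  finally show ?thesis unfolding k_def .
qed

(* The vector bounded here is (a / V) (E[X | y] - a y), where E[X | y] is the posterior mean
   M / gauss_conv p V a y and M the first-moment integral of gauss_conv_grad_eq. *)
lemma gauss_conv_score_bound:
  assumes V: "V = 1 - a\<^sup>2" "V > 0" and a: "a \<ge> 0" and R: "R > 0" "4 \<le> exp (R\<^sup>2 / (4 * \<tau>\<^sup>2))"
    and tail: "4 / R\<^sup>2 + (3 * a * norm y / R + a\<^sup>2 / 4) / (2 * V) \<le> 1 / \<tau>\<^sup>2"
  shows "norm (inverse (gauss_conv p V a y) *\<^sub>R gauss_conv_grad p V a y + y) \<le> a / V * (R + a * norm y)"
proof -
  define q where "q = gauss_conv p V a y"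
  define M where "M = (LINT x|lborel. (p x * gauss_kernel V a y x) *\<^sub>R x)"
  have q: "q > 0" unfolding q_def by (rule gauss_conv_pos[OF V(2)])
  have "inverse q *\<^sub>R gauss_conv_grad p V a y + y = (a / V) *\<^sub>R (inverse q *\<^sub>R M) + (1 - 1 / V) *\<^sub>R y"
    unfolding gauss_conv_grad_eq[OF V(2)] q_def[symmetric] M_def[symmetric] using q
    by (simp add: scaleR_diff_right scaleR_diff_left)
  also have "1 - 1 / V = - (a / V * a)"
  proof -
    have "a / V * a = (1 - V) / V" using V(1) by (simp add: power2_eq_square)
    also have "\<dots> = 1 / V - 1" using V(2) by (simp add: diff_divide_distrib)
    finally show ?thesis by simp
  qed
  finally have "inverse q *\<^sub>R gauss_conv_grad p V a y + y = (a / V) *\<^sub>R (inverse q *\<^sub>R M - a *\<^sub>R y)"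
    by (simp add: scaleR_diff_right)
  then have "norm (inverse q *\<^sub>R gauss_conv_grad p V a y + y) \<le> a / V * (norm M / q + a * norm y)"
    using q V a by (simp add: norm_triangle_ineq4 divide_inverse mult_left_mono abs_of_nonneg
                    order_trans[OF norm_triangle_ineq4])
  also have "\<dots> \<le> a / V * (R + a * norm y)"
    using gauss_conv_first_moment_le[OF V(2) a R tail, folded M_def q_def] q V a
    by (intro mult_left_mono add_right_mono) (auto simp: divide_le_eq)
  finally show ?thesis unfolding q_def .
qed

lemma gauss_conv_score_near_minus_id:
  assumes P: "1 \<le> P" "\<tau> \<le> P" and \<delta>: "\<delta> \<le> 1"
    and a: "0 < a" "a \<le> \<delta> / (16 * real DIM('a) * P)" and V: "V = 1 - a\<^sup>2"
  shows "norm (inverse (gauss_conv p V a y) *\<^sub>R gauss_conv_grad p V a y + y)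
           \<le> \<delta> / (2 * real DIM('a)) * (1 + norm y)"
proof -
  define R where "R = 7 * P * (1 + norm y)"
  have d: "real DIM('a) \<ge> 1" by simp
  note scale = ou_scale_bounds[OF d P(1) \<delta> less_imp_le[OF a(1)] a(2)]
  have V_ge: "1 / 2 \<le> V" using scale(4) V by simp
  have aP: "a * P \<le> 1 / 16" using scale(1,3) by linarith
  note loc = ou_localization_conditions[OF P(1) \<tau>_pos P(2) less_imp_le[OF a(1)] aP V_ge norm_ge_zero R_def]
  have "norm (inverse (gauss_conv p V a y) *\<^sub>R gauss_conv_grad p V a y + y) \<le> a / V * (R + a * norm y)"
    using V_ge a P(1) by (intro gauss_conv_score_bound[OF V _ _ _ loc]) (auto simp: R_def add_pos_nonneg)
  also have "\<dots> \<le> \<delta> / (2 * real DIM('a)) * (1 + norm y)"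
    unfolding R_def V using ou_drift_bound[OF d P(1) \<delta> less_imp_le[OF a(1)] a(2) norm_ge_zero] .
  finally show ?thesis .
qed

lemma nn_integral_gauss_conv_exp_moment_le:
  assumes V: "0 < V" "V \<le> 1" and a\<tau>: "\<bar>a\<bar> * \<tau> \<le> 1"
  shows "(\<integral>\<^sup>+ y. ennreal (gauss_conv p V a y * exp ((norm y)\<^sup>2 / (9 * real DIM('a)))) \<partial>lborel) \<le> ennreal (18 / 7)"
proof -
  define d where "d = real DIM('a)"
  define c where "c = 1 / (9 * d)"
  define w where "w = 1 - 2 * c * V"
  have d: "d \<ge> 1" unfolding d_def by simp
  have c: "0 < c" "c \<le> 1 / 9" unfolding c_def using d by (auto simp: field_simps)
  have "2 * c * V \<le> 2 / (9 * d)" unfolding c_def using V d by (simp add: field_simps)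
  then have w: "1 - 2 / (9 * d) \<le> w" "w \<le> 1" unfolding w_def using c V by auto
  have "2 / (9 * d) \<le> 2 / 9" using d by (simp add: field_simps)
  then have w79: "7 / 9 \<le> w" using w(1) by linarith
  have exponent: "c * (norm (a *\<^sub>R x))\<^sup>2 / w \<le> (norm x)\<^sup>2 / \<tau>\<^sup>2" for x
  proof -
    have "c / w \<le> 1" using c w79 by (simp add: divide_le_eq)
    moreover have "a\<^sup>2 \<le> 1 / \<tau>\<^sup>2"
      using power_mono[OF a\<tau>, of 2] \<tau>_pos by (simp add: power_mult_distrib field_simps)
    ultimately have "c / w * a\<^sup>2 \<le> 1 * (1 / \<tau>\<^sup>2)"
      using c w79 by (intro mult_mono) auto
    then have "c / w * a\<^sup>2 * (norm x)\<^sup>2 \<le> 1 / \<tau>\<^sup>2 * (norm x)\<^sup>2" by (intro mult_right_mono) auto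
    then show ?thesis by (simp add: power_mult_distrib)
  qed
  have "(\<integral>\<^sup>+ y. ennreal (gauss_conv p V a y * exp (c * (norm y)\<^sup>2)) \<partial>lborel)
      = ennreal (w powr (- d / 2)) * (\<integral>\<^sup>+ x. ennreal (p x * exp (c * (norm (a *\<^sub>R x))\<^sup>2 / w)) \<partial>lborel)"
    unfolding w_def d_def using V(1) w79 unfolding w_def
    by (intro nn_integral_gauss_conv_exp_norm_square) linarith+
  also have "\<dots> \<le> ennreal (9 / 7) * 2"
  proof (intro mult_mono)
    show "ennreal (w powr (- d / 2)) \<le> ennreal (9 / 7)"
      unfolding d_def using powr_neg_half_card_le[of "DIM('a)" w] w by (simp add: d_def ennreal_leI)
    have "(\<integral>\<^sup>+ x. ennreal (p x * exp (c * (norm (a *\<^sub>R x))\<^sup>2 / w)) \<partial>lborel)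
        \<le> (\<integral>\<^sup>+ x. ennreal (p x * exp ((norm x)\<^sup>2 / \<tau>\<^sup>2)) \<partial>lborel)"
      using exponent p_nonneg by (intro nn_integral_mono ennreal_leI mult_left_mono) auto
    then show "(\<integral>\<^sup>+ x. ennreal (p x * exp (c * (norm (a *\<^sub>R x))\<^sup>2 / w)) \<partial>lborel) \<le> 2"
      using nn_integral_exp_square by simp
  qed auto
  also have "\<dots> = ennreal (18 / 7)" by (simp flip: ennreal_mult ennreal_numeral)
  finally show ?thesis unfolding c_def d_def by (simp add: mult_ac)
qed

end

section \<open>Clipping\<close>

lemma clip_interval_error:
  fixes g c s l :: real
  assumes l: "0 \<le> l" and g: "\<bar>g - c\<bar> \<le> l"
  defines "t \<equiv> if \<bar>c - s\<bar> \<le> l then s else if s < c - l then c - l else c + l"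
  shows "\<bar>g - t\<bar> \<le> \<bar>g - s\<bar>" and "\<bar>g - t\<bar> \<le> 2 * l"
  using l g unfolding t_def by (auto simp: abs_le_iff)

lemma norm_square_vec: "(norm v)\<^sup>2 = (\<Sum>i\<in>UNIV. (v $ i)\<^sup>2)" for v :: "real^'n"
  unfolding power2_norm_eq_inner inner_vec_def by (simp add: power2_eq_square)

lemma clip_score_error:
  fixes g y :: "real^'n" and s :: "real^'n \<Rightarrow> real^'n"
  assumes \<delta>: "\<delta> \<ge> 0"
    and box: "\<And>i. \<bar>g $ i + y $ i\<bar> \<le> \<delta> / (2 * real CARD('n)) * (1 + norm y)"
  shows "(norm (g - clip_score \<delta> s y))\<^sup>2 \<le> (norm (g - s y))\<^sup>2"
    and "(norm (g - clip_score \<delta> s y))\<^sup>2 \<le> \<delta>\<^sup>2 * (1 + norm y)\<^sup>2 / real CARD('n)"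
proof -
  define l where "l = \<delta> / (2 * real CARD('n)) * (1 + norm y)"
  have l: "0 \<le> l" unfolding l_def using \<delta> by simp
  have comp: "\<bar>g $ i - clip_score \<delta> s y $ i\<bar> \<le> \<bar>g $ i - s y $ i\<bar>"
    "\<bar>g $ i - clip_score \<delta> s y $ i\<bar> \<le> \<bar>2 * l\<bar>" for i
    using clip_interval_error[OF l, of "g $ i" "- (y $ i)" "s y $ i"] box[of i] l
    unfolding clip_score_def Let_def l_def[symmetric] by simp_all
  then have sq: "(g $ i - clip_score \<delta> s y $ i)\<^sup>2 \<le> (g $ i - s y $ i)\<^sup>2"
    "(g $ i - clip_score \<delta> s y $ i)\<^sup>2 \<le> (2 * l)\<^sup>2" for i
    by (simp_all only: abs_le_square_iff)
  have "(\<Sum>i\<in>UNIV. (g $ i - clip_score \<delta> s y $ i)\<^sup>2) \<le> (\<Sum>i\<in>UNIV. (g $ i - s y $ i)\<^sup>2)"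
    by (rule sum_mono) (rule sq(1))
  moreover have "(\<Sum>i\<in>UNIV. (g $ i - clip_score \<delta> s y $ i)\<^sup>2) \<le> (\<Sum>i\<in>(UNIV::'n set). (2 * l)\<^sup>2)"
    by (rule sum_mono) (rule sq(2))
  moreover have "(\<Sum>i\<in>(UNIV::'n set). (2 * l)\<^sup>2) = \<delta>\<^sup>2 * (1 + norm y)\<^sup>2 / real CARD('n)"
    unfolding l_def by (simp add: power_mult_distrib power_divide field_simps power2_eq_square)
  ultimately show "(norm (g - clip_score \<delta> s y))\<^sup>2 \<le> (norm (g - s y))\<^sup>2"
    "(norm (g - clip_score \<delta> s y))\<^sup>2 \<le> \<delta>\<^sup>2 * (1 + norm y)\<^sup>2 / real CARD('n)"
    by (simp_all add: norm_square_vec)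
qed

lemma exp_le_split:
  fixes \<beta> m A B L :: real
  assumes m: "0 \<le> m" "m \<le> A" "m \<le> B" and \<beta>: "\<beta> \<ge> 0" and L: "L > 0"
  shows "exp (\<beta> * m) \<le> 1 + L * \<beta> * A + exp (2 * \<beta> * B) / L"
proof (cases "exp (\<beta> * m) \<le> L")
  case True
  have "exp (\<beta> * m) \<le> 1 + \<beta> * m * exp (\<beta> * m)"
    using exp_ge_add_one_self[of "- (\<beta> * m)"] by (simp add: exp_minus field_simps)
  also have "\<dots> \<le> 1 + \<beta> * A * L" using True m \<beta> by (intro add_left_mono mult_mono mult_left_mono) auto
  finally show ?thesis using L by (simp add: mult_ac add_increasing2)
next
  case False
  have "exp (\<beta> * m) = exp (2 * \<beta> * m) / exp (\<beta> * m)" by (simp flip: exp_diff)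
  also have "\<dots> \<le> exp (2 * \<beta> * B) / L"
    using False m \<beta> L by (intro frac_le) (auto simp: mult_left_mono)
  finally show ?thesis using m \<beta> L by (simp add: add_increasing)
qed

lemma exp_ninth_le: "exp (1 / 9 :: real) \<le> 9 / 8"
proof -
  have "8 / 9 \<le> exp (- (1 / 9 :: real))" using exp_ge_add_one_self[of "- (1 / 9) :: real"] by simp
  then show ?thesis by (simp add: exp_minus field_simps)
qed

lemma exp_clipped_error_le:
  fixes \<beta> \<delta> d m A r L :: real
  assumes \<beta>: "0 \<le> \<beta>" "\<beta> * \<delta>\<^sup>2 \<le> 1 / 36" and d: "d \<ge> 1" and L: "L > 0"
    and m: "0 \<le> m" "m \<le> A" "m \<le> \<delta>\<^sup>2 * (1 + r)\<^sup>2 / d"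
  shows "exp (\<beta> * m) \<le> 1 + L * \<beta> * A + 9 / (8 * L) * exp (r\<^sup>2 / (9 * d))"
proof -
  have "(1 + r)\<^sup>2 \<le> 2 + 2 * r\<^sup>2" using zero_le_power2[of "1 - r"] by (simp add: power2_eq_square algebra_simps)
  then have "2 * (\<beta> * \<delta>\<^sup>2) * (1 + r)\<^sup>2 \<le> 2 * (1 / 36) * (2 + 2 * r\<^sup>2)"
    using \<beta> by (intro mult_mono mult_left_mono) auto
  then have "2 * (\<beta> * \<delta>\<^sup>2) * (1 + r)\<^sup>2 / d \<le> 2 * (1 / 36) * (2 + 2 * r\<^sup>2) / d"
    using d by (intro divide_right_mono) auto
  then have "2 * \<beta> * (\<delta>\<^sup>2 * (1 + r)\<^sup>2 / d) \<le> 2 * (1 / 36) * (2 + 2 * r\<^sup>2) / d"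
    by (simp add: mult_ac)
  also have "\<dots> = 1 / (9 * d) + r\<^sup>2 / (9 * d)" using d by (simp add: field_simps)
  finally have "exp (2 * \<beta> * (\<delta>\<^sup>2 * (1 + r)\<^sup>2 / d)) \<le> exp (1 / (9 * d)) * exp (r\<^sup>2 / (9 * d))"
    by (simp flip: exp_add)
  also have "exp (1 / (9 * d)) \<le> exp (1 / 9)" using d by (simp add: field_simps)
  also have "\<dots> \<le> 9 / 8" by (rule exp_ninth_le)
  finally have "exp (2 * \<beta> * (\<delta>\<^sup>2 * (1 + r)\<^sup>2 / d)) / L \<le> 9 / 8 * exp (r\<^sup>2 / (9 * d)) / L"
    using L by (intro divide_right_mono) auto
  also have "\<dots> = 9 / (8 * L) * exp (r\<^sup>2 / (9 * d))" by simp
  finally have "exp (2 * \<beta> * (\<delta>\<^sup>2 * (1 + r)\<^sup>2 / d)) / L \<le> 9 / (8 * L) * exp (r\<^sup>2 / (9 * d))" .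
  then show ?thesis using exp_le_split[OF m \<beta>(1) L] by linarith
qed

lemma exp_clipped_score_error_le:
  fixes g y :: "real^'n" and s :: "real^'n \<Rightarrow> real^'n"
  assumes box: "\<And>i. \<bar>g $ i + y $ i\<bar> \<le> \<delta> / (2 * real CARD('n)) * (1 + norm y)"
    and \<delta>: "0 \<le> \<delta>" and \<beta>: "0 \<le> \<beta>" "\<beta> * \<delta>\<^sup>2 \<le> 1 / 36" and L: "0 < L"
  shows "exp (\<beta> * (norm (g - clip_score \<delta> s y))\<^sup>2)
           \<le> 1 + L * \<beta> * (norm (g - s y))\<^sup>2 + 9 / (8 * L) * exp ((norm y)\<^sup>2 / (9 * real CARD('n)))"
  using clip_score_error[OF \<delta> box, of s]
  by (intro exp_clipped_error_le[OF \<beta> _ L zero_le_power2]) simp_all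

section \<open>The clipped score at the end of the forward process\<close>

lemma gauss_conv_score_in_clip_box:
  fixes p :: "real^'d \<Rightarrow> real"
  assumes "subgaussian_density p \<tau>" and P: "1 \<le> P" "\<tau> \<le> P" and \<delta>: "\<delta> \<le> 1"
    and a: "0 < a" "a \<le> \<delta> / (16 * real CARD('d) * P)" and V: "V = 1 - a\<^sup>2"
  shows "\<bar>grad (\<lambda>z. ln (gauss_conv p V a z)) y $ i + y $ i\<bar> \<le> \<delta> / (2 * real CARD('d)) * (1 + norm y)"
proof -
  interpret subgaussian_density p \<tau> by fact
  have d: "1 \<le> real CARD('d)" by simp
  have "0 < V" using ou_scale_bounds(4)[OF d P(1) \<delta> less_imp_le[OF a(1)] a(2)] V by simp
  let ?score = "grad (\<lambda>z. ln (gauss_conv p V a z)) y"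
  have "\<bar>?score $ i + y $ i\<bar> \<le> norm (?score + y)"
    using component_le_norm_cart[of "?score + y" i] by simp
  also have "\<dots> \<le> \<delta> / (2 * real CARD('d)) * (1 + norm y)"
    using gauss_conv_score_near_minus_id[OF P \<delta> a(1) _ V, of y] a(2)
    unfolding grad_ln_gauss_conv[OF prob_density_axioms \<open>0 < V\<close>] by simp
  finally show ?thesis .
qed

lemma nn_integral_density_affine_bound:
  fixes q A E f :: "'a \<Rightarrow> real"
  assumes [measurable]: "q \<in> borel_measurable M" "A \<in> borel_measurable M" "E \<in> borel_measurable M"
    and nonneg: "\<And>y. 0 \<le> q y" "\<And>y. 0 \<le> A y" "\<And>y. 0 \<le> E y" "0 \<le> \<alpha>" "0 \<le> \<kappa>" "0 \<le> b" "0 \<le> e"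
    and total: "(\<integral>\<^sup>+ y. ennreal (q y) \<partial>M) = 1"
    and A_int: "(\<integral>\<^sup>+ y. ennreal (q y * A y) \<partial>M) \<le> ennreal b"
    and E_int: "(\<integral>\<^sup>+ y. ennreal (q y * E y) \<partial>M) \<le> ennreal e"
    and f: "\<And>y. f y \<le> 1 + \<alpha> * A y + \<kappa> * E y"
  shows "(\<integral>\<^sup>+ y. ennreal (q y * f y) \<partial>M) \<le> ennreal (1 + \<alpha> * b + \<kappa> * e)"
proof -
  have "(\<integral>\<^sup>+ y. ennreal (q y * f y) \<partial>M)
      \<le> (\<integral>\<^sup>+ y. ennreal (q y) + ennreal \<alpha> * ennreal (q y * A y) + ennreal \<kappa> * ennreal (q y * E y) \<partial>M)"
  proof (rule nn_integral_mono)
    fix y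
    have "q y * f y \<le> q y + \<alpha> * (q y * A y) + \<kappa> * (q y * E y)"
      using mult_left_mono[OF f nonneg(1)] by (simp add: algebra_simps)
    then show "ennreal (q y * f y) \<le> ennreal (q y) + ennreal \<alpha> * ennreal (q y * A y) + ennreal \<kappa> * ennreal (q y * E y)"
      using nonneg by (simp add: ennreal_mult'[symmetric] ennreal_plus[symmetric] del: ennreal_plus)
  qed
  also have "\<dots> = 1 + ennreal \<alpha> * (\<integral>\<^sup>+ y. ennreal (q y * A y) \<partial>M) + ennreal \<kappa> * (\<integral>\<^sup>+ y. ennreal (q y * E y) \<partial>M)"
    by (simp add: nn_integral_add nn_integral_cmult total)
  also have "\<dots> \<le> 1 + ennreal \<alpha> * ennreal b + ennreal \<kappa> * ennreal e"
    by (intro add_mono mult_left_mono A_int E_int order_refl) auto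
  also have "\<dots> = ennreal (1 + \<alpha> * b + \<kappa> * e)"
  proof -
    have "0 \<le> \<alpha> * b" "0 \<le> \<kappa> * e" using nonneg by simp_all
    then have "ennreal (1 + \<alpha> * b + \<kappa> * e) = ennreal 1 + ennreal (\<alpha> * b) + ennreal (\<kappa> * e)"
      by (simp only: ennreal_plus add_nonneg_nonneg zero_le_one)
    then show ?thesis using nonneg by (simp add: ennreal_mult')
  qed
  finally show ?thesis .
qed

lemma nn_integral_gauss_conv_exp_clipped_score_le:
  fixes p :: "real^'d \<Rightarrow> real" and s :: "real^'d \<Rightarrow> real^'d"
  assumes "subgaussian_density p \<tau>" and P: "1 \<le> P" "\<tau> \<le> P" and \<delta>: "0 < \<delta>" "\<delta> \<le> 1"
    and a: "0 < a" "a \<le> \<delta> / (16 * real CARD('d) * P)" and V: "V = 1 - a\<^sup>2"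
    and [measurable]: "s \<in> borel_measurable borel"
    and \<beta>: "0 < \<beta>" "\<beta> * \<delta>\<^sup>2 \<le> 1 / 36" and \<epsilon>: "0 < \<epsilon>"
    and score_error: "(\<integral>\<^sup>+ y. ennreal (gauss_conv p V a y *
              (norm (grad (\<lambda>z. ln (gauss_conv p V a z)) y - s y))\<^sup>2) \<partial>lborel) \<le> ennreal (\<epsilon>\<^sup>2 / (550 * \<beta>))"
  shows "(\<integral>\<^sup>+ y. ennreal (gauss_conv p V a y *
              exp (\<beta> * (norm (grad (\<lambda>z. ln (gauss_conv p V a z)) y - clip_score \<delta> s y))\<^sup>2)) \<partial>lborel)
         \<le> ennreal (exp \<epsilon>)"
proof -
  interpret subgaussian_density p \<tau> by fact
  have d: "1 \<le> real CARD('d)" by simp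
  note scale = ou_scale_bounds[OF d P(1) \<delta>(2) less_imp_le[OF a(1)] a(2)]
  have V_bounds: "0 < V" "V \<le> 1" using scale(4) V by simp_all
  have "a * \<tau> \<le> a * P" using a(1) P(2) by (intro mult_left_mono) auto
  then have "a * \<tau> \<le> 1" using scale(1,3) by linarith
  then have a\<tau>: "\<bar>a\<bar> * \<tau> \<le> 1" using a(1) by simp
  define score where "score y = grad (\<lambda>z. ln (gauss_conv p V a z)) y" for y
  have score_eq: "score = (\<lambda>y. inverse (gauss_conv p V a y) *\<^sub>R gauss_conv_grad p V a y)"
    using grad_ln_gauss_conv[OF prob_density_axioms V_bounds(1)] by (simp add: score_def fun_eq_iff)
  have "(\<integral>\<^sup>+ y. ennreal (gauss_conv p V a y * exp (\<beta> * (norm (score y - clip_score \<delta> s y))\<^sup>2)) \<partial>lborel)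
      \<le> ennreal (1 + 6 / \<epsilon> * \<beta> * (\<epsilon>\<^sup>2 / (550 * \<beta>)) + 9 / (8 * (6 / \<epsilon>)) * (18 / 7))"
  proof (rule nn_integral_density_affine_bound[OF _ _ _ _ _ _ _ _ _ _ nn_integral_gauss_conv[OF V_bounds(1)]])
    show "exp (\<beta> * (norm (score y - clip_score \<delta> s y))\<^sup>2)
            \<le> 1 + 6 / \<epsilon> * \<beta> * (norm (score y - s y))\<^sup>2 + 9 / (8 * (6 / \<epsilon>)) * exp ((norm y)\<^sup>2 / (9 * real CARD('d)))" for y
      unfolding score_def using \<delta>(1) \<beta> \<epsilon>
      by (intro exp_clipped_score_error_le gauss_conv_score_in_clip_box[OF assms(1) P \<delta>(2) a V]) auto
    show "(\<integral>\<^sup>+ y. ennreal (gauss_conv p V a y * exp ((norm y)\<^sup>2 / (9 * real CARD('d)))) \<partial>lborel) \<le> ennreal (18 / 7)"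
      using nn_integral_gauss_conv_exp_moment_le[OF V_bounds a\<tau>] by simp
    show "(\<integral>\<^sup>+ y. ennreal (gauss_conv p V a y * (norm (score y - s y))\<^sup>2) \<partial>lborel) \<le> ennreal (\<epsilon>\<^sup>2 / (550 * \<beta>))"
      using score_error unfolding score_def .
  qed (use \<epsilon> \<beta> gauss_conv_pos[OF V_bounds(1), THEN less_imp_le] in \<open>auto simp: score_eq\<close>)
  also have "\<dots> \<le> ennreal (1 + \<epsilon>)"
    using \<epsilon> \<beta> by (intro ennreal_leI) (simp add: field_simps power2_eq_square)
  also have "\<dots> \<le> ennreal (exp \<epsilon>)" by (intro ennreal_leI exp_ge_add_one_self)
  finally show ?thesis unfolding score_def .
qed

lemma psi2_norm_nonneg:
  assumes "norm_subgaussian p"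
  shows "psi2_norm p \<ge> 0"
  using assms unfolding psi2_norm_def norm_subgaussian_def
  by (intro cInf_greatest) auto

lemma subgaussian_density_near_psi2_norm:
  assumes "prob_density p" and "norm_subgaussian p"
  obtains \<tau> where "subgaussian_density p \<tau>" and "\<tau> \<le> psi2_norm p + 1"
proof -
  define S where "S = {t. t > 0 \<and> (\<integral>\<^sup>+ x. ennreal (p x * exp ((norm x)\<^sup>2 / t\<^sup>2)) \<partial>lborel) \<le> 2}"
  have "S \<noteq> {}" using assms(2) unfolding norm_subgaussian_def S_def by auto
  then obtain \<tau> where "\<tau> \<in> S" "\<tau> < Inf S + 1" using cInf_lessD[of S "Inf S + 1"] by auto
  then show ?thesis
    using that assms(1) unfolding S_def psi2_norm_def
    by (auto simp: subgaussian_density_def subgaussian_density_axioms_def)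
qed

lemma ou_time_bounds:
  fixes d P \<delta> T :: real
  assumes \<delta>: "0 < \<delta>" "\<delta> \<le> 1" and d: "1 \<le> d" and P: "1 \<le> P" and T: "ln (16 / \<delta> * d * P) \<le> T"
  shows "exp (- T) \<le> \<delta> / (16 * d * P)" and "0 \<le> T"
proof -
  have "1 \<le> d * P" using mult_mono[OF d P] d by simp
  moreover have "1 \<le> 16 / \<delta>" using \<delta> by (simp add: field_simps)
  ultimately have "1 * 1 \<le> 16 / \<delta> * (d * P)" using \<delta> by (intro mult_mono) auto
  then have X: "1 \<le> 16 / \<delta> * d * P" by (simp add: mult.assoc)
  then show "0 \<le> T" using T ln_ge_zero[OF X] by linarith
  have "exp (- T) \<le> exp (- ln (16 / \<delta> * d * P))" using T by simp
  also have "\<dots> = \<delta> / (16 * d * P)"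
    using X unfolding exp_minus by (subst exp_ln) auto
  finally show "exp (- T) \<le> \<delta> / (16 * d * P)" .
qed

lemma borel_measurable_lipschitz_slice:
  assumes "C-lipschitz_on (S \<times> UNIV) (\<lambda>(t, x). f t x)" and "t \<in> S"
  shows "f t \<in> borel_measurable borel"
proof -
  have "continuous_on (S \<times> UNIV) (\<lambda>(t, x). f t x)" by (rule lipschitz_on_continuous_on[OF assms(1)])
  then have "continuous_on UNIV ((\<lambda>(t, x). f t x) \<circ> (\<lambda>x. (t, x)))"
    by (rule continuous_on_compose[rotated, OF continuous_on_subset])
       (auto intro!: continuous_intros simp: assms(2))
  then show ?thesis by (simp add: o_def borel_measurable_continuous_onI)
qed

theorem theorem2:
  fixes p :: "real^'d \<Rightarrow> real"
    and s :: "real \<Rightarrow> real^'d \<Rightarrow> real^'d"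
    and Ls :: "real \<Rightarrow> real"
    and T1 \<delta> \<epsilon> \<beta> :: real
  assumes p_meas: "p \<in> borel_measurable borel"
    and p_nonneg: "\<And>x. p x \<ge> 0"
    and p_prob: "(\<integral>\<^sup>+ x. ennreal (p x) \<partial>lborel) = 1"
    and subg: "norm_subgaussian p"
    and s_lip: "\<exists>C. C-lipschitz_on ({0..T1} \<times> UNIV) (\<lambda>(t, x). s t x)"
    and Ls_onesided: "\<And>t x y. t \<in> {0..T1} \<Longrightarrow>
          (s t x - s t y) \<bullet> (x - y) \<le> Ls t * (norm (x - y))^2"
    and \<delta>_pos: "0 < \<delta>" and \<delta>_lt: "\<delta> < 1"
    and T1_ge: "T1 \<ge> ln (16 / \<delta> * real CARD('d) * (psi2_norm p + 1))"
    and \<epsilon>_pos: "0 < \<epsilon>" and \<epsilon>_lt: "\<epsilon> < 1"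
    and \<beta>_pos: "0 < \<beta>" and \<beta>_le: "\<beta> \<le> 1 / (36 * \<delta>^2)"
    and b_small: "(\<integral>\<^sup>+ y. ennreal (ou_density p T1 y *
              (norm (grad (\<lambda>z. ln (ou_density p T1 z)) y - s T1 y))^2) \<partial>lborel)
          \<le> ennreal (1 / (550 * \<beta>) * \<epsilon> powr (2 + 36 * \<beta> * \<delta>^2))"
  shows "(\<integral>\<^sup>+ y. ennreal (ou_density p T1 y *
              exp (\<beta> * (norm (grad (\<lambda>z. ln (ou_density p T1 z)) y
                              - clip_score \<delta> (s T1) y))^2)) \<partial>lborel)
         \<le> ennreal (exp \<epsilon>)"
proof -
  interpret prob_density p using p_meas p_nonneg p_prob by unfold_locales
  obtain \<tau> where \<tau>: "subgaussian_density p \<tau>" "\<tau> \<le> psi2_norm p + 1"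
    using subgaussian_density_near_psi2_norm[OF prob_density_axioms subg] by blast
  define P a V where "P = psi2_norm p + 1" and "a = exp (- T1)" and "V = 1 - exp (- 2 * T1)"
  have P: "1 \<le> P" "\<tau> \<le> P" using psi2_norm_nonneg[OF subg] \<tau>(2) by (auto simp: P_def)
  have d: "1 \<le> real CARD('d)" by simp
  note time = ou_time_bounds[OF \<delta>_pos less_imp_le[OF \<delta>_lt] d P(1) T1_ge[folded P_def]]
  have a: "0 < a" "a \<le> \<delta> / (16 * real CARD('d) * P)" using time(1) unfolding a_def by simp_all
  have V: "V = 1 - a\<^sup>2" unfolding V_def a_def by (simp flip: exp_add add: power2_eq_square)
  have ou: "ou_density p T1 = gauss_conv p V a"
    unfolding ou_density_def gauss_conv_def gauss_kernel_def V_def a_def Let_def by simp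
  have "s T1 \<in> borel_measurable borel"
    using s_lip borel_measurable_lipschitz_slice time(2) by fastforce
  moreover have "\<beta> * \<delta>\<^sup>2 \<le> 1 / 36" using \<beta>_le \<delta>_pos by (simp add: field_simps)
  moreover have "1 / (550 * \<beta>) * \<epsilon> powr (2 + 36 * \<beta> * \<delta>\<^sup>2) \<le> \<epsilon>\<^sup>2 / (550 * \<beta>)"
    using powr_mono'[of 2 "2 + 36 * \<beta> * \<delta>\<^sup>2" \<epsilon>] \<epsilon>_pos \<epsilon>_lt \<beta>_pos
    by (simp add: powr_realpow divide_right_mono)
  then have "(\<integral>\<^sup>+ y. ennreal (gauss_conv p V a y *
                (norm (grad (\<lambda>z. ln (gauss_conv p V a z)) y - s T1 y))\<^sup>2) \<partial>lborel)
             \<le> ennreal (\<epsilon>\<^sup>2 / (550 * \<beta>))"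
    using b_small unfolding ou by (meson ennreal_leI order_trans)
  ultimately show ?thesis
    unfolding ou
    by (rule nn_integral_gauss_conv_exp_clipped_score_le[OF \<tau>(1) P \<delta>_pos less_imp_le[OF \<delta>_lt] a V _ \<beta>_pos _ \<epsilon>_pos])
qed

end
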